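(* Under the standing setting and assumptions (A0)–(A3) below, for every $n\in\mathbb N$, almost surely, \[ \mathbb E_n[d^2(x_{n+1},x^* )]\leq(1+2\lambda_n^2)\,d^2(x_n,x^* )-2\lambda_n\underline\alpha\, d^2(x_n,x^* )+\lambda_n^2V_n, \] where $V_n:=2\,\mathbb E_n\big[\|A_{\lambda_n}(\xi_{n+1},x_n)\|^2_{x_{n+1}}\big]+\int\|\phi^*\|^2_{x^*}\,d\mu$.
   Context: Geometry. A Hadamard space is a complete CAT(0) space: a geodesic metric space $(X,d)$ with $d^2(\gamma(tl),x)\leq (1-t)d^2(\gamma(0),x)+td^2(\gamma(l),x)-t(1-t)d^2(\gamma(0),\gamma(l))$ for all $x\in X$, geodesics $\gamma:[0,l]\to X$, $t\in[0,1]$; it is uniquely geodesic, $\gamma_{x,y}$ denoting the geodesic from $x$ to $y$. For $x\in X$, $\angle_x(\gamma,\eta):=\lim_{s,t\to0^+}\bar\angle_x(\gamma(s),\eta(t))$ is the Aleksandrov angle between nonconstant geodesics issuing from $x$; $\Sigma_xX$ is the completion of such geodesics modulo $\angle_x=0$; the tangent space $T_xX$ is the Euclidean cone over $\Sigma_xX$ (elements $t\gamma$, $t\ge0$, all $0\gamma$ identified to $0_x$, $\lambda(t\gamma):=(\lambda t)\gamma$), with metric $d_x(t\gamma,s\eta)=\sqrt{t^2+s^2-2ts\cos\angle_x(\gamma,\eta)}$, $\|t\gamma\|_x=t$, $g_x(t\gamma,s\eta)=ts\cos\angle_x(\gamma,\eta)$; $TX=\bigcup_xT_xX$. $\log_x:X\to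 T_xX$, $\log_xa:=d(x,a)\gamma_{x,a}$ ($a\ne x$), $\log_xx:=0_x$. Vector fields. $A:X\to2^{TX}$ with $A(x)\subseteq T_xX$ is monotone if $g_x(u,\log_xy)\le-g_y(v,\log_yx)$ for all $u\in A(x),v\in A(y)$, and strongly monotone with modulus $\alpha>0$ if $g_x(u,\log_xy)\le-g_y(v,\log_yx)-\alpha d^2(x,y)$. For monotone $A$ and $\lambda>0$, the resolvent $J_\lambda x$ is the unique $z$ with $\tfrac1\lambda\log_zx\in A(z)$ (if it exists); $A$ satisfies the surjectivity condition if such $z$ exists for all $\lambda>0,x\in X$. The Yosida approximate is $A_\lambda x:=\tfrac1\lambda\log_{J_\lambda x}x\in T_{J_\lambda x}X$. Integration. For a probability space and a separable Hadamard space $Y$, $L^p$ consists of measurable $Y$-valued maps with finite $p$-th moment of distance; the integral/expectation of an $L^1$ map is the barycenter of its distribution (minimizer of $z\mapsto\int(d^2(z,w)-d^2(w,y))$), and conditional expectation $\mathbb E[x\mid\mathcal G]$ of $x\in L^2$ is the $\mathcal G$-measurable $L^2$ map minimizing $\int d^2(z,x)$ (extended continuously to $L^1$); this applies to $Y=X$ and $Y=T_xX$. Standing setting. $(E,\mathcal E,\mu)$ and $(\Omega,\mathcal F,\mathbb P)$ are probability spaces; $X$ is a separable Hadamard space with every $T_xX$ separable. $A:E\times X\to2^{TX}$, $A(s,x)\subseteq T_xX$, is a random monotone vector field: each $A(s,\cdot)$ is monotone and $s\mapsto J_\lambda(s,x)$ is $\mathcal E/\mathcal B(X)$-measurable for every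 $x,\lambda$, where $J_\lambda(s,\cdot)$, $A_\lambda(s,\cdot)$ denote resolvent and Yosida approximate of $A(s,\cdot)$; moreover each $A(s,\cdot)$ satisfies the surjectivity condition. For $x\in X$, $S^p_A(x)$ is the set of measurable $\phi:E\to T_xX$ with $\phi(s)\in A(s,x)$ for all $s$ and $\phi\in L^p(E,T_xX,\mu)$; the mean field is $\underline A(x):=\{\int\phi\,d\mu\mid\phi\in S^1_A(x)\}$; $\mathcal Z_A(2):=\{x\mid\exists\phi\in S^2_A(x),\ \int\phi\,d\mu=0_x\}$. Given $x_0\in X$, $(\lambda_n)\subseteq(0,\infty)$ and random variables $\xi_n:\Omega\to E$, the iteration is $x_{n+1}:=J_{\lambda_n}(\xi_{n+1},x_n)$; $\mathcal F_n:=\sigma(\xi_1,\dots,\xi_n)$ ($\mathcal F_0$ trivial), $\mathbb E_n[\cdot]:=\mathbb E[\cdot\mid\mathcal F_n]$. Note $\|A_{\lambda_n}(\xi_{n+1},x_n)\|_{x_{n+1}}=d(x_n,x_{n+1})/\lambda_n$. Assumptions. (A0) $\sum_n\lambda_n^2<\infty$, $\sum_n\lambda_n=\infty$, and $(\xi_{n+1})$ is i.i.d. with distribution $\mu$. (A1) each $A(s,\cdot)$ is strongly monotone with modulus $\alpha(s)\in(0,1]$, where $\alpha:E\to(0,1]$ is measurable with $\underline\alpha:=\int\alpha\,d\mu>0$. (A2) $\underline A$ has a zero $x^*$ (i.e. $0_{x^*}\in\underline A(x^* )$) with $x^*\in\mathcal Z_A(2)$; a fixed $\phi^*\in S^2_A(x^*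 )$ with $\int\phi^*\,d\mu=0_{x^*}$ is chosen. (A3) $\mathbb E_n[g_{x^*}(\phi^*(\xi_{n+1}),\log_{x^*}x_n)]=0$ a.s. for every $n\in\mathbb N$. *)

theory Defs
  imports "HOL-Probability.Probability"
begin

definition is_geodesic :: "(real \<Rightarrow> 'a::metric_space) \<Rightarrow> real \<Rightarrow> bool" where
  "is_geodesic \<gamma> l \<longleftrightarrow> l \<ge> 0 \<and>
     (\<forall>s\<in>{0..l}. \<forall>t\<in>{0..l}. dist (\<gamma> s) (\<gamma> t) = \<bar>s - t\<bar>)"

definition geodesic_space :: "'a::metric_space itself \<Rightarrow> bool" where
  "geodesic_space _ \<longleftrightarrow>
     (\<forall>x y::'a. \<exists>\<gamma>. is_geodesic \<gamma> (dist x y) \<and> \<gamma> 0 = x \<and> \<gamma> (dist x y) = y)"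

definition CAT0_ineq :: "'a::metric_space itself \<Rightarrow> bool" where
  "CAT0_ineq _ \<longleftrightarrow>
     (\<forall>(\<gamma>::real \<Rightarrow> 'a) l x t. is_geodesic \<gamma> l \<and> t \<in> {0..1} \<longrightarrow>
        (dist (\<gamma> (t * l)) x)\<^sup>2 \<le> (1 - t) * (dist (\<gamma> 0) x)\<^sup>2 + t * (dist (\<gamma> l) x)\<^sup>2
                                   - t * (1 - t) * (dist (\<gamma> 0) (\<gamma> l))\<^sup>2)"

definition hadamard_space :: "'a::metric_space itself \<Rightarrow> bool" where
  "hadamard_space T \<longleftrightarrow> (\<forall>f::nat \<Rightarrow> 'a. Cauchy f \<longrightarrow> convergent f) \<and> geodesic_space T \<and> CAT0_ineq T"

text \<open>The geodesic from x to y, parametrised on [0, d(x,y)] and extended constantly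
  outside this interval (to make it a unique function).\<close>
definition geod_seg :: "'a::metric_space \<Rightarrow> 'a \<Rightarrow> real \<Rightarrow> 'a" where
  "geod_seg x y = (THE \<gamma>. is_geodesic \<gamma> (dist x y) \<and> \<gamma> 0 = x \<and> \<gamma> (dist x y) = y \<and>
                        (\<forall>s. \<gamma> s = \<gamma> (max 0 (min (dist x y) s))))"

text \<open>A nonconstant geodesic issuing from x is represented as a pair (l, gamma).\<close>
type_synonym 'a geod = "real \<times> (real \<Rightarrow> 'a)"

definition geods_from :: "'a::metric_space \<Rightarrow> 'a geod set" where
  "geods_from x = {(l, \<gamma>). l > 0 \<and> is_geodesic \<gamma> l \<and> \<gamma> 0 = x}"

definition cmp_angle :: "'a::metric_space \<Rightarrow> 'a \<Rightarrow> 'a \<Rightarrow> real" where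
  "cmp_angle x a b = arccos (((dist x a)\<^sup>2 + (dist x b)\<^sup>2 - (dist a b)\<^sup>2) / (2 * dist x a * dist x b))"

definition alex_angle :: "'a::metric_space \<Rightarrow> 'a geod \<Rightarrow> 'a geod \<Rightarrow> real" where
  "alex_angle x \<gamma> \<eta> =
     Lim (at_right 0 \<times>\<^sub>F at_right 0) (\<lambda>(s, t). cmp_angle x (snd \<gamma> s) (snd \<eta> t))"

text \<open>Points of the completion of the space of directions: angle-Cauchy sequences of
  nonconstant geodesics issuing from x (identified via the induced distance).\<close>
definition dir_seqs :: "'a::metric_space \<Rightarrow> (nat \<Rightarrow> 'a geod) set" where
  "dir_seqs x = {\<sigma>. (\<forall>n. \<sigma> n \<in> geods_from x) \<and>
      (\<forall>e>0. \<exists>N. \<forall>m\<ge>N. \<forall>n\<ge>N. alex_angle x (\<sigma> m) (\<sigma> n) < e)}"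

definition seq_angle :: "'a::metric_space \<Rightarrow> (nat \<Rightarrow> 'a geod) \<Rightarrow> (nat \<Rightarrow> 'a geod) \<Rightarrow> real" where
  "seq_angle x \<sigma> \<tau> = lim (\<lambda>n. alex_angle x (\<sigma> n) (\<tau> n))"

text \<open>Representatives t*sigma of elements of the Euclidean cone; for t = 0 the direction
  is irrelevant (all 0*sigma are identified with the origin 0_x).\<close>
type_synonym 'a trep = "real \<times> (nat \<Rightarrow> 'a geod)"

definition treps :: "'a::metric_space \<Rightarrow> 'a trep set" where
  "treps x = {(t, \<sigma>). t = 0 \<or> (t > 0 \<and> \<sigma> \<in> dir_seqs x)}"

definition rep_dist :: "'a::metric_space \<Rightarrow> 'a trep \<Rightarrow> 'a trep \<Rightarrow> real" where
  "rep_dist x v w = sqrt ((fst v)\<^sup>2 + (fst w)\<^sup>2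
                      - 2 * fst v * fst w * cos (seq_angle x (snd v) (snd w)))"

definition rep_inner :: "'a::metric_space \<Rightarrow> 'a trep \<Rightarrow> 'a trep \<Rightarrow> real" where
  "rep_inner x v w = fst v * fst w * cos (seq_angle x (snd v) (snd w))"

text \<open>Tangent vectors are equivalence classes of representatives at distance 0.\<close>
type_synonym 'a tvec = "'a trep set"

definition tclass :: "'a::metric_space \<Rightarrow> 'a trep \<Rightarrow> 'a tvec" where
  "tclass x v = {w \<in> treps x. rep_dist x v w = 0}"

definition tangent_space :: "'a::metric_space \<Rightarrow> 'a tvec set" where
  "tangent_space x = tclass x ` treps x"

definition tdist :: "'a::metric_space \<Rightarrow> 'a tvec \<Rightarrow> 'a tvec \<Rightarrow> real" where
  "tdist x U V = rep_dist x (SOME u. u \<in> U) (SOME v. v \<in> V)"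

definition tinner :: "'a::metric_space \<Rightarrow> 'a tvec \<Rightarrow> 'a tvec \<Rightarrow> real" where
  "tinner x U V = rep_inner x (SOME u. u \<in> U) (SOME v. v \<in> V)"

definition tnorm :: "'a::metric_space \<Rightarrow> 'a tvec \<Rightarrow> real" where
  "tnorm x U = fst (SOME u. u \<in> U)"

definition tzero :: "'a::metric_space \<Rightarrow> 'a tvec" where
  "tzero x = tclass x (0, undefined)"

definition tscale :: "'a::metric_space \<Rightarrow> real \<Rightarrow> 'a tvec \<Rightarrow> 'a tvec" where
  "tscale x c U = (let u = (SOME u. u \<in> U) in tclass x (c * fst u, snd u))"

definition tlog :: "'a::metric_space \<Rightarrow> 'a \<Rightarrow> 'a tvec" where
  "tlog x a = (if a = x then tzero x
               else tclass x (dist x a, \<lambda>n. (dist x a, geod_seg x a)))"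

definition tangent_topology :: "'a::metric_space \<Rightarrow> 'a tvec topology" where
  "tangent_topology x = topology (\<lambda>U. U \<subseteq> tangent_space x \<and>
      (\<forall>u\<in>U. \<exists>e>0. {v \<in> tangent_space x. tdist x u v < e} \<subseteq> U))"

definition tangent_borel :: "'a::metric_space \<Rightarrow> 'a tvec measure" where
  "tangent_borel x = sigma (tangent_space x) {U. openin (tangent_topology x) U}"

type_synonym 'a vfield = "'a \<Rightarrow> 'a tvec set"

definition monotone_vf :: "'a::metric_space vfield \<Rightarrow> bool" where
  "monotone_vf A \<longleftrightarrow> (\<forall>x y. \<forall>u\<in>A x. \<forall>v\<in>A y.
      tinner x u (tlog x y) \<le> - tinner y v (tlog y x))"

definition strongly_monotone_vf :: "'a::metric_space vfield \<Rightarrow> real \<Rightarrow> bool" where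
  "strongly_monotone_vf A \<alpha> \<longleftrightarrow> \<alpha> > 0 \<and> (\<forall>x y. \<forall>u\<in>A x. \<forall>v\<in>A y.
      tinner x u (tlog x y) \<le> - tinner y v (tlog y x) - \<alpha> * (dist x y)\<^sup>2)"

definition resolvent :: "'a::metric_space vfield \<Rightarrow> real \<Rightarrow> 'a \<Rightarrow> 'a" where
  "resolvent A l x = (THE z. tscale z (1 / l) (tlog z x) \<in> A z)"

definition surjectivity_cond :: "'a::metric_space vfield \<Rightarrow> bool" where
  "surjectivity_cond A \<longleftrightarrow> (\<forall>l>0. \<forall>x. \<exists>z. tscale z (1 / l) (tlog z x) \<in> A z)"

definition yosida :: "'a::metric_space vfield \<Rightarrow> real \<Rightarrow> 'a \<Rightarrow> 'a tvec" where
  "yosida A l x = tscale (resolvent A l x) (1 / l) (tlog (resolvent A l x) x)"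

definition tangent_Lp :: "'e measure \<Rightarrow> 'a::metric_space \<Rightarrow> nat \<Rightarrow> ('e \<Rightarrow> 'a tvec) \<Rightarrow> bool" where
  "tangent_Lp M x p \<phi> \<longleftrightarrow> \<phi> \<in> M \<rightarrow>\<^sub>M tangent_borel x \<and>
      integrable M (\<lambda>s. (tdist x (\<phi> s) (tzero x)) ^ p)"

definition is_tangent_barycenter :: "'e measure \<Rightarrow> 'a::metric_space \<Rightarrow> ('e \<Rightarrow> 'a tvec) \<Rightarrow> 'a tvec \<Rightarrow> bool" where
  "is_tangent_barycenter M x \<phi> b \<longleftrightarrow> b \<in> tangent_space x \<and>
     (\<forall>z\<in>tangent_space x.
        (\<integral>s. (tdist x b (\<phi> s))\<^sup>2 - (tdist x (\<phi> s) (tzero x))\<^sup>2 \<partial>M)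
          \<le> (\<integral>s. (tdist x z (\<phi> s))\<^sup>2 - (tdist x (\<phi> s) (tzero x))\<^sup>2 \<partial>M))"

definition selections :: "'e measure \<Rightarrow> ('e \<Rightarrow> 'a::metric_space vfield) \<Rightarrow> nat \<Rightarrow> 'a \<Rightarrow> ('e \<Rightarrow> 'a tvec) set" where
  "selections M A p x = {\<phi>. (\<forall>s\<in>space M. \<phi> s \<in> A s x) \<and> tangent_Lp M x p \<phi>}"

definition natural_filtration :: "'w measure \<Rightarrow> 'e measure \<Rightarrow> (nat \<Rightarrow> 'w \<Rightarrow> 'e) \<Rightarrow> nat \<Rightarrow> 'w measure" where
  "natural_filtration P M \<xi> n =
     sigma (space P) {\<xi> i -` B \<inter> space P | i B. i \<in> {1..n} \<and> B \<in> sets M}"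

end

theory Submission
  imports Defs
begin

(* Let z = x_(n+1) = J_lambda(xi_(n+1), x_n) and v = A_lambda(xi_(n+1), x_n) = lambda^-1 log_z x_n,
   so that v lies in A(xi_(n+1), z). Since Alexandrov angles are bounded by comparison angles, the
   tangent cone at z satisfies the comparison inequality
     d^2(z, x_n) + d^2(z, xstar) - d^2(x_n, xstar) <= 2 lambda g_z(v, log_z xstar).
   Combined with strong monotonicity of A(xi_(n+1), .) between z and xstar (where phistar(xi_(n+1)) is the
   element of A(xi_(n+1), xstar)) and the 1-Lipschitz dependence of g_xstar(u, log_xstar .), this bounds
   d^2(x_(n+1), xstar) pathwise by d^2(x_n, xstar), alpha(xi_(n+1)), g_xstar(phistar(xi_(n+1)), log_xstar x_n),
   |phistar(xi_(n+1))|^2 and |v|^2. Conditioning on F_n, d^2(x_n, xstar) is F_n-measurable, xi_(n+1) is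
   independent of F_n so alpha and |phistar|^2 are replaced by their means, and the cross term
   vanishes by (A3). The iterates are measurable because resolvents are continuous in x, which
   makes them Caratheodory functions on a separable space. *)

section \<open>Geodesics and comparison angles\<close>

lemma hadamard_spaceD:
  assumes "hadamard_space TYPE('a::metric_space)"
  shows "geodesic_space TYPE('a)" and "CAT0_ineq TYPE('a)"
  using assms by (auto simp: hadamard_space_def)

lemma is_geodesicD:
  "is_geodesic \<gamma> l \<Longrightarrow> s \<in> {0..l} \<Longrightarrow> t \<in> {0..l} \<Longrightarrow> dist (\<gamma> s) (\<gamma> t) = \<bar>s - t\<bar>"
  by (auto simp: is_geodesic_def)

lemma is_geodesic_dist_start:
  "is_geodesic \<gamma> l \<Longrightarrow> \<gamma> 0 = x \<Longrightarrow> 0 \<le> s \<Longrightarrow> s \<le> l \<Longrightarrow> dist x (\<gamma> s) = s"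
  using is_geodesicD[of \<gamma> l 0 s] by auto

lemma is_geodesic_neq_start:
  "is_geodesic \<gamma> l \<Longrightarrow> \<gamma> 0 = x \<Longrightarrow> 0 < s \<Longrightarrow> s \<le> l \<Longrightarrow> \<gamma> s \<noteq> x"
  using is_geodesicD[of \<gamma> l 0 s] by auto

lemma is_geodesic_restrict: "is_geodesic \<gamma> l \<Longrightarrow> 0 \<le> s \<Longrightarrow> s \<le> l \<Longrightarrow> is_geodesic \<gamma> s"
  by (auto simp: is_geodesic_def)

lemma CAT0_ineqD:
  assumes "CAT0_ineq TYPE('a::metric_space)" "is_geodesic (\<gamma>::real \<Rightarrow> 'a) l" "0 \<le> t" "t \<le> 1"
  shows "(dist (\<gamma> (t * l)) z)\<^sup>2 \<le> (1 - t) * (dist (\<gamma> 0) z)\<^sup>2 + t * (dist (\<gamma> l) z)\<^sup>2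
                                   - t * (1 - t) * (dist (\<gamma> 0) (\<gamma> l))\<^sup>2"
  using assms unfolding CAT0_ineq_def by auto

lemma CAT0_geodesic_unique:
  assumes cat: "CAT0_ineq TYPE('a::metric_space)"
    and g: "is_geodesic (\<gamma>::real \<Rightarrow> 'a) l" and h: "is_geodesic \<eta> l"
    and start: "\<gamma> 0 = \<eta> 0" and finish: "\<gamma> l = \<eta> l" and s: "s \<in> {0..l}"
  shows "\<gamma> s = \<eta> s"
proof (cases "l = 0")
  case True
  then show ?thesis using s start by auto
next
  case False
  then have l: "l > 0" using g by (auto simp: is_geodesic_def)
  define t where "t = s / l"
  have t: "0 \<le> t" "t \<le> 1" and tl: "t * l = s" using s l by (auto simp: t_def field_simps)
  have "dist (\<gamma> 0) (\<eta> s) = s" "dist (\<gamma> l) (\<eta> s) = l - s" "dist (\<gamma> 0) (\<gamma> l) = l"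
    using is_geodesicD[OF h, of 0 s] is_geodesicD[OF h, of l s] is_geodesicD[OF g, of 0 l] s l start finish
    by auto
  then have "(dist (\<gamma> s) (\<eta> s))\<^sup>2 \<le> (1 - t) * s\<^sup>2 + t * (l - s)\<^sup>2 - t * (1 - t) * l\<^sup>2"
    using CAT0_ineqD[OF cat g t, of "\<eta> s"] tl by simp
  also have "\<dots> = 0" by (simp add: power2_eq_square algebra_simps flip: tl)
  finally show ?thesis by simp
qed

lemma geod_seg_spec:
  assumes "hadamard_space TYPE('a::metric_space)"
  shows "is_geodesic (geod_seg x y) (dist x y)" "geod_seg x y 0 = (x::'a)" "geod_seg x y (dist x y) = y"
proof -
  let ?d = "dist x y"
  let ?P = "\<lambda>\<gamma>. is_geodesic \<gamma> ?d \<and> \<gamma> 0 = x \<and> \<gamma> ?d = y \<and> (\<forall>s. \<gamma> s = \<gamma> (max 0 (min ?d s)))"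
  obtain \<gamma> where g: "is_geodesic \<gamma> ?d" "\<gamma> 0 = x" "\<gamma> ?d = y"
    using hadamard_spaceD(1)[OF assms] unfolding geodesic_space_def by blast
  define \<gamma>' where "\<gamma>' s = \<gamma> (max 0 (min ?d s))" for s
  have eq: "\<gamma>' s = \<gamma> s" if "s \<in> {0..?d}" for s using that by (auto simp: \<gamma>'_def)
  have "?P \<gamma>'"
  proof (intro conjI allI)
    show "is_geodesic \<gamma>' ?d" using g(1) eq unfolding is_geodesic_def by auto
  qed (use g in \<open>auto simp: \<gamma>'_def\<close>)
  moreover have "\<gamma>1 = \<gamma>2" if "?P \<gamma>1" "?P \<gamma>2" for \<gamma>1 \<gamma>2
  proof
    fix s
    have "\<gamma>1 (max 0 (min ?d s)) = \<gamma>2 (max 0 (min ?d s))"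
      by (rule CAT0_geodesic_unique[OF hadamard_spaceD(2)[OF assms]]) (use that in auto)
    then show "\<gamma>1 s = \<gamma>2 s" using that by metis
  qed
  ultimately have "\<exists>!\<gamma>. ?P \<gamma>" by blast
  then have "?P (geod_seg x y)" unfolding geod_seg_def by (rule theI')
  then show "is_geodesic (geod_seg x y) (dist x y)" "geod_seg x y 0 = x" "geod_seg x y (dist x y) = y"
    by blast+
qed

definition cmp_cos :: "'a::metric_space \<Rightarrow> 'a \<Rightarrow> 'a \<Rightarrow> real" where
  "cmp_cos x a b = ((dist x a)\<^sup>2 + (dist x b)\<^sup>2 - (dist a b)\<^sup>2) / (2 * dist x a * dist x b)"

lemma cmp_angle_eq_arccos: "cmp_angle x a b = arccos (cmp_cos x a b)"
  by (simp add: cmp_angle_def cmp_cos_def)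

lemma cmp_angle_commute: "cmp_angle x a b = cmp_angle x b a"
  by (simp add: cmp_angle_def dist_commute mult_ac add_ac)

lemma cmp_cos_bounds:
  assumes "a \<noteq> x" "b \<noteq> x"
  shows "-1 \<le> cmp_cos x a b" "cmp_cos x a b \<le> 1"
proof -
  let ?p = "dist x a" and ?q = "dist x b" and ?r = "dist a b"
  have pq: "2 * ?p * ?q > 0" using assms by simp
  have r1: "\<bar>?p - ?q\<bar> \<le> ?r" and r2: "?r \<le> ?p + ?q"
    using dist_triangle[of x a b] dist_triangle[of x b a] dist_triangle[of a b x]
    by (auto simp: dist_commute)
  have "(?p - ?q)\<^sup>2 \<le> ?r\<^sup>2" using power_mono[OF r1, of 2] by simp
  moreover have "?r\<^sup>2 \<le> (?p + ?q)\<^sup>2" using r2 by (simp add: power_mono)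
  ultimately have "?p\<^sup>2 + ?q\<^sup>2 - ?r\<^sup>2 \<le> 2 * ?p * ?q" "- (2 * ?p * ?q) \<le> ?p\<^sup>2 + ?q\<^sup>2 - ?r\<^sup>2"
    by (simp_all add: power2_eq_square algebra_simps)
  then show "-1 \<le> cmp_cos x a b" "cmp_cos x a b \<le> 1"
    unfolding cmp_cos_def using pq by (simp_all add: le_divide_eq divide_le_eq_1)
qed

lemma cmp_angle_bounds:
  assumes "a \<noteq> x" "b \<noteq> x"
  shows "0 \<le> cmp_angle x a b" "cmp_angle x a b \<le> pi"
  using cmp_cos_bounds[OF assms]
  by (auto simp: cmp_angle_eq_arccos intro: arccos_lbound arccos_ubound)

lemma cos_cmp_angle:
  assumes "a \<noteq> x" "b \<noteq> x"
  shows "cos (cmp_angle x a b) = cmp_cos x a b"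
  using cmp_cos_bounds[OF assms] by (simp add: cmp_angle_eq_arccos)

lemma dist_cmp_angle:
  assumes "a \<noteq> x" "b \<noteq> x"
  shows "(dist a b)\<^sup>2 = (dist x a)\<^sup>2 + (dist x b)\<^sup>2 - 2 * dist x a * dist x b * cos (cmp_angle x a b)"
  using assms by (simp add: cos_cmp_angle cmp_cos_def)

lemma cmp_angle_self: "a \<noteq> x \<Longrightarrow> cmp_angle x a a = 0"
  by (simp add: cmp_angle_eq_arccos cmp_cos_def power2_eq_square)

lemma cmp_cos_antimono:
  assumes cat: "CAT0_ineq TYPE('a::metric_space)"
    and g: "is_geodesic (\<gamma>::real \<Rightarrow> 'a) l" "\<gamma> 0 = x" and b: "b \<noteq> x"
    and s: "0 < s'" "s' \<le> s" "s \<le> l"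
  shows "cmp_cos x (\<gamma> s) b \<le> cmp_cos x (\<gamma> s') b"
proof -
  define t where "t = s' / s"
  have t: "0 < t" "t \<le> 1" and ts: "t * s = s'" using s by (auto simp: t_def field_simps)
  define D where "D = dist x b"
  define e where "e = dist (\<gamma> s) b"
  define e' where "e' = dist (\<gamma> s') b"
  have D: "D > 0" using b by (simp add: D_def)
  have d: "dist x (\<gamma> s) = s" "dist x (\<gamma> s') = s'"
    using is_geodesic_dist_start[OF g] s by simp_all
  have "e'\<^sup>2 \<le> (1 - t) * D\<^sup>2 + t * e\<^sup>2 - t * (1 - t) * s\<^sup>2"
    using CAT0_ineqD[OF cat is_geodesic_restrict[OF g(1), of s], of t b] s t ts d g(2)
    unfolding e'_def e_def D_def by simp
  then have key: "t * (s\<^sup>2 + D\<^sup>2 - e\<^sup>2) \<le> s'\<^sup>2 + D\<^sup>2 - e'\<^sup>2"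
    by (simp add: power2_eq_square algebra_simps flip: ts)
  have "cmp_cos x (\<gamma> s) b = t * (s\<^sup>2 + D\<^sup>2 - e\<^sup>2) / (2 * s' * D)"
    unfolding cmp_cos_def d using t s D by (simp add: e_def D_def flip: ts)
  also have "\<dots> \<le> (s'\<^sup>2 + D\<^sup>2 - e'\<^sup>2) / (2 * s' * D)"
    using key s D by (intro divide_right_mono) auto
  also have "\<dots> = cmp_cos x (\<gamma> s') b" unfolding cmp_cos_def d by (simp add: e'_def D_def)
  finally show ?thesis .
qed

lemma cmp_angle_mono:
  assumes cat: "CAT0_ineq TYPE('a::metric_space)"
    and g: "is_geodesic (\<gamma>::real \<Rightarrow> 'a) l" "\<gamma> 0 = x" and b: "b \<noteq> x"
    and s: "0 < s'" "s' \<le> s" "s \<le> l"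
  shows "cmp_angle x (\<gamma> s') b \<le> cmp_angle x (\<gamma> s) b"
proof -
  have "\<gamma> s \<noteq> x" "\<gamma> s' \<noteq> x" using is_geodesic_neq_start[OF g] s by auto
  then show ?thesis unfolding cmp_angle_eq_arccos
    using cmp_cos_bounds[of "\<gamma> s" x b] cmp_cos_bounds[of "\<gamma> s'" x b] cmp_cos_antimono[OF assms] b
    by (intro arccos_le_arccos) auto
qed

lemma cmp_angle_mono2:
  assumes cat: "CAT0_ineq TYPE('a::metric_space)"
    and g: "is_geodesic (\<gamma>::real \<Rightarrow> 'a) l1" "\<gamma> 0 = x"
    and h: "is_geodesic (\<eta>::real \<Rightarrow> 'a) l2" "\<eta> 0 = x"
    and s: "0 < s'" "s' \<le> s" "s \<le> l1" and t: "0 < t'" "t' \<le> t" "t \<le> l2"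
  shows "cmp_angle x (\<gamma> s') (\<eta> t') \<le> cmp_angle x (\<gamma> s) (\<eta> t)"
proof -
  have "cmp_angle x (\<gamma> s') (\<eta> t') \<le> cmp_angle x (\<gamma> s) (\<eta> t')"
    using cmp_angle_mono[OF cat g is_geodesic_neq_start[OF h, of t'] s] t by simp
  also have "\<dots> = cmp_angle x (\<eta> t') (\<gamma> s)" by (rule cmp_angle_commute)
  also have "\<dots> \<le> cmp_angle x (\<eta> t) (\<gamma> s)"
    using cmp_angle_mono[OF cat h is_geodesic_neq_start[OF g, of s] t] s by simp
  also have "\<dots> = cmp_angle x (\<gamma> s) (\<eta> t)" by (rule cmp_angle_commute)
  finally show ?thesis .
qed

section \<open>Alexandrov angles\<close>

lemma eventually_at_right_0_prodI:
  fixes a b :: real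
  assumes "0 < a" "0 < b" "\<And>s t. s \<in> {0<..a} \<Longrightarrow> t \<in> {0<..b} \<Longrightarrow> P (s, t)"
  shows "eventually P (at_right 0 \<times>\<^sub>F at_right (0::real))"
proof -
  have ev: "eventually (\<lambda>s. s \<in> {0<..c}) (at_right (0::real))" if "0 < c" for c :: real
    unfolding eventually_at_right_field using that by (intro exI[of _ c]) auto
  have "eventually (\<lambda>z. fst z \<in> {0<..a} \<and> snd z \<in> {0<..b}) (at_right 0 \<times>\<^sub>F at_right (0::real))"
    using ev[OF assms(1)] ev[OF assms(2)] by (rule eventually_prodI)
  then show ?thesis by (rule eventually_mono) (use assms(3) in auto)
qed

lemma tendsto_Inf_at_right_0_prod:
  fixes f :: "real \<times> real \<Rightarrow> real"
  assumes l: "l1 > 0" "l2 > 0"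
    and mono: "\<And>s s' t t'. 0 < s' \<Longrightarrow> s' \<le> s \<Longrightarrow> s \<le> l1 \<Longrightarrow> 0 < t' \<Longrightarrow> t' \<le> t \<Longrightarrow> t \<le> l2
                 \<Longrightarrow> f (s', t') \<le> f (s, t)"
    and bdd: "bdd_below (f ` ({0<..l1} \<times> {0<..l2}))"
  shows "(f \<longlongrightarrow> Inf (f ` ({0<..l1} \<times> {0<..l2}))) (at_right 0 \<times>\<^sub>F at_right 0)"
proof (rule order_tendstoI)
  let ?I = "Inf (f ` ({0<..l1} \<times> {0<..l2}))"
  fix a assume "a < ?I"
  moreover have "?I \<le> f (s, t)" if "s \<in> {0<..l1}" "t \<in> {0<..l2}" for s t
    using that bdd by (intro cInf_lower) auto
  ultimately show "\<forall>\<^sub>F st in at_right 0 \<times>\<^sub>F at_right 0. a < f st"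
    using l by (intro eventually_at_right_0_prodI[of l1 l2]) force+
next
  let ?I = "Inf (f ` ({0<..l1} \<times> {0<..l2}))"
  fix a assume "?I < a"
  then obtain s0 t0 where st0: "s0 \<in> {0<..l1}" "t0 \<in> {0<..l2}" "f (s0, t0) < a"
    using l by (subst (asm) cInf_less_iff) (auto simp: bdd)
  then have "f (s, t) < a" if "s \<in> {0<..s0}" "t \<in> {0<..t0}" for s t
    using mono[of s s0 t t0] that by fastforce
  then show "\<forall>\<^sub>F st in at_right 0 \<times>\<^sub>F at_right 0. f st < a"
    using st0 by (intro eventually_at_right_0_prodI[of s0 t0]) auto
qed

lemma geods_fromD:
  assumes "g \<in> geods_from x"
  shows "fst g > 0" "is_geodesic (snd g) (fst g)" "snd g 0 = x"
  using assms by (auto simp: geods_from_def)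

definition cmp_angles :: "'a::metric_space \<Rightarrow> 'a geod \<Rightarrow> 'a geod \<Rightarrow> real set" where
  "cmp_angles x g h = (\<lambda>(s, t). cmp_angle x (snd g s) (snd h t)) ` ({0<..fst g} \<times> {0<..fst h})"

lemma cmp_angles_bounds:
  assumes g: "g \<in> geods_from x" and h: "h \<in> geods_from x" and c: "c \<in> cmp_angles x g h"
  shows "0 \<le> c" "c \<le> pi"
  using c cmp_angle_bounds[OF is_geodesic_neq_start[OF geods_fromD(2,3)[OF g]]
                               is_geodesic_neq_start[OF geods_fromD(2,3)[OF h]]]
  by (auto simp: cmp_angles_def)

lemma cmp_angles_memI:
  "s \<in> {0<..fst g} \<Longrightarrow> t \<in> {0<..fst h} \<Longrightarrow> cmp_angle x (snd g s) (snd h t) \<in> cmp_angles x g h"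
  unfolding cmp_angles_def by (rule rev_image_eqI[of "(s, t)"]) auto

lemma cmp_angles_nonempty:
  "g \<in> geods_from x \<Longrightarrow> h \<in> geods_from x \<Longrightarrow> cmp_angles x g h \<noteq> {}"
  using cmp_angles_memI[of "fst g" g "fst h" h x] geods_fromD(1) by fastforce

lemma bdd_below_cmp_angles:
  "g \<in> geods_from x \<Longrightarrow> h \<in> geods_from x \<Longrightarrow> bdd_below (cmp_angles x g h)"
  using cmp_angles_bounds(1) by (meson bdd_below.I)

context
  fixes x :: "'a::metric_space"
  assumes cat: "CAT0_ineq TYPE('a)"
begin

lemma alex_angle_eq_Inf:
  assumes g: "g \<in> geods_from x" and h: "h \<in> geods_from x"
  shows "alex_angle x g h = Inf (cmp_angles x g h)"
proof -
  let ?f = "\<lambda>(s, t). cmp_angle x (snd g s) (snd h t)"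
  have "(?f \<longlongrightarrow> Inf (cmp_angles x g h)) (at_right 0 \<times>\<^sub>F at_right 0)"
    unfolding cmp_angles_def
  proof (rule tendsto_Inf_at_right_0_prod)
    show "bdd_below (?f ` ({0<..fst g} \<times> {0<..fst h}))"
      using bdd_below_cmp_angles[OF g h] unfolding cmp_angles_def .
    show "?f (s', t') \<le> ?f (s, t)"
      if "0 < s'" "s' \<le> s" "s \<le> fst g" "0 < t'" "t' \<le> t" "t \<le> fst h" for s s' t t'
      using cmp_angle_mono2[OF cat geods_fromD(2,3)[OF g] geods_fromD(2,3)[OF h] that] by simp
  qed (use geods_fromD(1)[OF g] geods_fromD(1)[OF h] in auto)
  moreover have "at_right (0::real) \<times>\<^sub>F at_right (0::real) \<noteq> bot"
    by (simp add: prod_filter_eq_bot)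
  ultimately show ?thesis
    unfolding alex_angle_def by (intro tendsto_Lim) auto
qed

lemma alex_angle_le_cmp_angle:
  assumes g: "g \<in> geods_from x" and h: "h \<in> geods_from x"
    and "s \<in> {0<..fst g}" "t \<in> {0<..fst h}"
  shows "alex_angle x g h \<le> cmp_angle x (snd g s) (snd h t)"
  unfolding alex_angle_eq_Inf[OF g h]
  by (intro cInf_lower cmp_angles_memI bdd_below_cmp_angles assms)

lemma alex_angle_bounds:
  assumes g: "g \<in> geods_from x" and h: "h \<in> geods_from x"
  shows "0 \<le> alex_angle x g h" "alex_angle x g h \<le> pi"
proof -
  show "0 \<le> alex_angle x g h"
    unfolding alex_angle_eq_Inf[OF g h]
    using cmp_angles_bounds(1)[OF g h] cmp_angles_nonempty[OF g h] by (intro cInf_greatest) auto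
  have s: "fst g \<in> {0<..fst g}" "fst h \<in> {0<..fst h}"
    using geods_fromD(1)[OF g] geods_fromD(1)[OF h] by auto
  have "alex_angle x g h \<le> cmp_angle x (snd g (fst g)) (snd h (fst h))"
    using s by (rule alex_angle_le_cmp_angle[OF g h])
  also have "\<dots> \<le> pi"
    using s by (intro cmp_angles_bounds(2)[OF g h] cmp_angles_memI)
  finally show "alex_angle x g h \<le> pi" .
qed

lemma alex_angle_approx:
  assumes g: "g \<in> geods_from x" and h: "h \<in> geods_from x" and e: "e > 0"
  obtains s0 t0 where "s0 \<in> {0<..fst g}" "t0 \<in> {0<..fst h}"
    "\<And>s t. s \<in> {0<..s0} \<Longrightarrow> t \<in> {0<..t0} \<Longrightarrow> cmp_angle x (snd g s) (snd h t) < alex_angle x g h + e"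
proof -
  obtain s0 t0 where st0: "s0 \<in> {0<..fst g}" "t0 \<in> {0<..fst h}"
    "cmp_angle x (snd g s0) (snd h t0) < alex_angle x g h + e"
    using cInf_lessD[OF cmp_angles_nonempty[OF g h], of "alex_angle x g h + e"] e
    unfolding alex_angle_eq_Inf[OF g h] by (auto simp: cmp_angles_def)
  have "cmp_angle x (snd g s) (snd h t) < alex_angle x g h + e" if "s \<in> {0<..s0}" "t \<in> {0<..t0}" for s t
    using cmp_angle_mono2[OF cat geods_fromD(2,3)[OF g] geods_fromD(2,3)[OF h], of s s0 t t0] that st0
    by auto
  then show ?thesis using that st0 by blast
qed

lemma alex_angle_commute:
  assumes g: "g \<in> geods_from x" and h: "h \<in> geods_from x"
  shows "alex_angle x g h = alex_angle x h g"
proof -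
  have "cmp_angles x g h = cmp_angles x h g"
    unfolding cmp_angles_def by (force simp: cmp_angle_commute)
  then show ?thesis unfolding alex_angle_eq_Inf[OF g h] alex_angle_eq_Inf[OF h g] by simp
qed

lemma alex_angle_self:
  assumes g: "g \<in> geods_from x"
  shows "alex_angle x g g = 0"
proof -
  have s: "fst g \<in> {0<..fst g}" using geods_fromD(1)[OF g] by auto
  have "alex_angle x g g \<le> cmp_angle x (snd g (fst g)) (snd g (fst g))"
    using s s by (rule alex_angle_le_cmp_angle[OF g g])
  also have "\<dots> = 0"
    using is_geodesic_neq_start[OF geods_fromD(2,3)[OF g]] s by (intro cmp_angle_self) auto
  finally show ?thesis using alex_angle_bounds(1)[OF g g] by simp
qed

end

text \<open>The Euclidean picture: unit vectors \<open>u\<close>, \<open>w\<close> at angle \<open>a + b\<close>, and \<open>v\<close> at angle \<open>a\<close> from \<open>u\<close>.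
  The ray through \<open>v\<close> meets the segment \<open>[u, w]\<close> at distance \<open>q\<close> from the origin and divides it
  in the ratio \<open>\<mu> : 1 - \<mu>\<close>.\<close>
lemma euclidean_angle_split:
  fixes a b :: real
  assumes a: "0 < a" and b: "0 < b" and ab: "a + b < pi"
  defines "q \<equiv> sin (a + b) / (sin a + sin b)" and "\<mu> \<equiv> sin a / (sin a + sin b)"
  shows "q > 0" "0 < \<mu>" "\<mu> < 1"
    "1 + q\<^sup>2 - 2 * q * cos a = \<mu>\<^sup>2 * (2 - 2 * cos (a + b))"
    "q\<^sup>2 + 1 - 2 * q * cos b = (1 - \<mu>)\<^sup>2 * (2 - 2 * cos (a + b))"
proof -
  have sa: "sin a > 0" and sb: "sin b > 0" and sab: "sin (a + b) > 0"
    using a b ab by (auto intro: sin_gt_zero)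
  then have S: "sin a + sin b > 0" by simp
  show "q > 0" "0 < \<mu>" "\<mu> < 1" unfolding q_def \<mu>_def using sa sb sab S by (auto simp: field_simps)
  have pyth: "(sin a)\<^sup>2 + (cos a)\<^sup>2 = 1" "(sin b)\<^sup>2 + (cos b)\<^sup>2 = 1" by simp_all
  have qS: "q * (sin a + sin b) = sin a * cos b + cos a * sin b"
    unfolding q_def sin_add using S by simp
  have "(1 + q\<^sup>2 - 2 * q * cos a) * (sin a + sin b)\<^sup>2
      = (sin a + sin b)\<^sup>2 + (q * (sin a + sin b))\<^sup>2 - 2 * (q * (sin a + sin b)) * cos a * (sin a + sin b)"
    by (simp add: algebra_simps power2_eq_square)
  also have "\<dots> = (sin a)\<^sup>2 * (2 - 2 * (cos a * cos b - sin a * sin b))"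
    unfolding qS using pyth by algebra
  also have "\<dots> = \<mu>\<^sup>2 * (2 - 2 * cos (a + b)) * (sin a + sin b)\<^sup>2"
    unfolding \<mu>_def cos_add using S by (simp add: power_divide)
  finally show "1 + q\<^sup>2 - 2 * q * cos a = \<mu>\<^sup>2 * (2 - 2 * cos (a + b))" using S by simp
  have "(q\<^sup>2 + 1 - 2 * q * cos b) * (sin a + sin b)\<^sup>2
      = (q * (sin a + sin b))\<^sup>2 + (sin a + sin b)\<^sup>2 - 2 * (q * (sin a + sin b)) * cos b * (sin a + sin b)"
    by (simp add: algebra_simps power2_eq_square)
  also have "\<dots> = (sin b)\<^sup>2 * (2 - 2 * (cos a * cos b - sin a * sin b))"
    unfolding qS using pyth by algebra
  also have "\<dots> = (1 - \<mu>)\<^sup>2 * (2 - 2 * cos (a + b)) * (sin a + sin b)\<^sup>2"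
    unfolding \<mu>_def cos_add using S by (simp add: power_divide field_simps)
  finally show "q\<^sup>2 + 1 - 2 * q * cos b = (1 - \<mu>)\<^sup>2 * (2 - 2 * cos (a + b))" using S by simp
qed

lemma dist_sq_lt_of_cmp_angle_lt:
  assumes ne: "a \<noteq> x" "b \<noteq> x" and lt: "cmp_angle x a b < \<theta>" "\<theta> \<le> pi"
  shows "(dist a b)\<^sup>2 < (dist x a)\<^sup>2 + (dist x b)\<^sup>2 - 2 * dist x a * dist x b * cos \<theta>"
proof -
  have "cos \<theta> < cos (cmp_angle x a b)"
    using lt cmp_angle_bounds[OF ne] by (intro cos_monotone_0_pi) auto
  then have "2 * dist x a * dist x b * cos \<theta> < 2 * dist x a * dist x b * cos (cmp_angle x a b)"
    using ne by (intro mult_strict_left_mono) auto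
  then show ?thesis using dist_cmp_angle[OF ne] by linarith
qed

lemma dist_sq_ge_of_cmp_angle_ge:
  assumes ne: "a \<noteq> x" "b \<noteq> x" and ge: "\<theta> \<le> cmp_angle x a b" "0 \<le> \<theta>"
  shows "(dist x a)\<^sup>2 + (dist x b)\<^sup>2 - 2 * dist x a * dist x b * cos \<theta> \<le> (dist a b)\<^sup>2"
proof -
  have "cos (cmp_angle x a b) \<le> cos \<theta>"
    using ge cmp_angle_bounds[OF ne] by (intro cos_monotone_0_pi_le) auto
  then have "2 * dist x a * dist x b * cos (cmp_angle x a b) \<le> 2 * dist x a * dist x b * cos \<theta>"
    by (intro mult_left_mono) auto
  then show ?thesis using dist_cmp_angle[OF ne] by linarith
qed

lemma cmp_angle_lt_add:
  fixes x u v w :: "'a::metric_space"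
  assumes ab: "0 < a" "0 < b" "a + b < pi" and r: "r > 0"
    and d: "dist x u = r" "dist x v = sin (a + b) / (sin a + sin b) * r" "dist x w = r"
    and uv: "cmp_angle x u v < a" and vw: "cmp_angle x v w < b"
  shows "cmp_angle x u w < a + b"
proof (rule ccontr)
  assume "\<not> cmp_angle x u w < a + b"
  then have uw: "a + b \<le> cmp_angle x u w" by simp
  define q where "q = sin (a + b) / (sin a + sin b)"
  define \<mu> where "\<mu> = sin a / (sin a + sin b)"
  define S where "S = sqrt (2 - 2 * cos (a + b))"
  note pl = euclidean_angle_split[OF ab, folded q_def \<mu>_def]
  have SS: "S\<^sup>2 = 2 - 2 * cos (a + b)" and S0: "S \<ge> 0"
    unfolding S_def using cos_le_one[of "a + b"] by simp_all
  have dv: "dist x v = q * r" using d(2) by (simp add: q_def)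
  have ne: "u \<noteq> x" "v \<noteq> x" "w \<noteq> x" using d(1,3) dv r pl(1) by auto
  have "dist u v < r * \<mu> * S"
  proof (rule power_less_imp_less_base)
    have "r\<^sup>2 + (q * r)\<^sup>2 - 2 * r * (q * r) * cos a = r\<^sup>2 * (1 + q\<^sup>2 - 2 * q * cos a)"
      by (simp add: algebra_simps power2_eq_square)
    also have "\<dots> = (r * \<mu> * S)\<^sup>2" using pl(4) SS by (simp add: power_mult_distrib)
    finally show "(dist u v)\<^sup>2 < (r * \<mu> * S)\<^sup>2"
      using dist_sq_lt_of_cmp_angle_lt[OF ne(1,2) uv] ab d(1) dv by simp
  qed (use r pl(2) S0 in auto)
  moreover have "dist v w < r * (1 - \<mu>) * S"
  proof (rule power_less_imp_less_base)
    have "(q * r)\<^sup>2 + r\<^sup>2 - 2 * (q * r) * r * cos b = r\<^sup>2 * (q\<^sup>2 + 1 - 2 * q * cos b)"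
      by (simp add: algebra_simps power2_eq_square)
    also have "\<dots> = (r * (1 - \<mu>) * S)\<^sup>2" using pl(5) SS by (simp add: power_mult_distrib)
    finally show "(dist v w)\<^sup>2 < (r * (1 - \<mu>) * S)\<^sup>2"
      using dist_sq_lt_of_cmp_angle_lt[OF ne(2,3) vw] ab d(3) dv by simp
  qed (use r pl(3) S0 in auto)
  moreover have "r * S \<le> dist u w"
  proof (rule power2_le_imp_le)
    have "(r * S)\<^sup>2 = r\<^sup>2 * (2 - 2 * cos (a + b))" using SS by (simp add: power_mult_distrib)
    also have "\<dots> = r\<^sup>2 + r\<^sup>2 - 2 * r * r * cos (a + b)" by (simp add: algebra_simps power2_eq_square)
    also have "\<dots> \<le> (dist u w)\<^sup>2"
      using dist_sq_ge_of_cmp_angle_ge[OF ne(1,3) uw] ab d(1,3) by simp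
    finally show "(r * S)\<^sup>2 \<le> (dist u w)\<^sup>2" .
  qed simp
  ultimately show False
    using dist_triangle[of u w v] by (simp add: algebra_simps)
qed

context
  fixes x :: "'a::metric_space"
  assumes cat: "CAT0_ineq TYPE('a)"
begin

lemma alex_angle_triangle:
  assumes g: "g \<in> geods_from x" and h: "h \<in> geods_from x" and k: "k \<in> geods_from x"
  shows "alex_angle x g k \<le> alex_angle x g h + alex_angle x h k"
proof (rule ccontr)
  define a where "a = alex_angle x g h"
  define b where "b = alex_angle x h k"
  define c where "c = alex_angle x g k"
  assume "\<not> c \<le> a + b"
  then have \<delta>: "(c - a - b) / 3 > 0" by (simp add: a_def b_def c_def)
  define a' where "a' = a + (c - a - b) / 3"
  define b' where "b' = b + (c - a - b) / 3"
  have ab': "0 < a'" "0 < b'" "a' + b' < pi" and c: "a' + b' < c"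
    using alex_angle_bounds[OF cat g h] alex_angle_bounds[OF cat h k] alex_angle_bounds[OF cat g k] \<delta>
    by (auto simp: a'_def b'_def a_def b_def c_def field_simps)
  define q where "q = sin (a' + b') / (sin a' + sin b')"
  have q: "q > 0" using euclidean_angle_split(1)[OF ab'] by (simp add: q_def)
  obtain s0 t0 where st0: "s0 \<in> {0<..fst g}" "t0 \<in> {0<..fst h}"
    "\<And>s t. s \<in> {0<..s0} \<Longrightarrow> t \<in> {0<..t0} \<Longrightarrow> cmp_angle x (snd g s) (snd h t) < a'"
    using alex_angle_approx[OF cat g h \<delta>] unfolding a'_def a_def by blast
  obtain s1 t1 where st1: "s1 \<in> {0<..fst h}" "t1 \<in> {0<..fst k}"
    "\<And>s t. s \<in> {0<..s1} \<Longrightarrow> t \<in> {0<..t1} \<Longrightarrow> cmp_angle x (snd h s) (snd k t) < b'"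
    using alex_angle_approx[OF cat h k \<delta>] unfolding b'_def b_def by blast
  define r where "r = min (min s0 t1) (min (t0 / q) (s1 / q))"
  have "q * r \<le> q * (t0 / q)" "q * r \<le> q * (s1 / q)"
    using q by (intro mult_left_mono; simp add: r_def)+
  then have r: "0 < r" "r \<le> s0" "r \<le> t1" "q * r \<le> t0" "q * r \<le> s1"
    using st0 st1 q by (auto simp: r_def)
  have qr: "0 < q * r" using q r by simp
  have d: "dist x (snd g r) = r" "dist x (snd h (q * r)) = q * r" "dist x (snd k r) = r"
    using is_geodesic_dist_start[OF geods_fromD(2,3)[OF g], of r]
      is_geodesic_dist_start[OF geods_fromD(2,3)[OF h], of "q * r"]
      is_geodesic_dist_start[OF geods_fromD(2,3)[OF k], of r] r qr st0 st1 by auto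
  have "cmp_angle x (snd g r) (snd k r) < a' + b'"
    using cmp_angle_lt_add[OF ab' r(1) d[unfolded q_def]] st0(3)[of r "q * r"] st1(3)[of "q * r" r] r qr
    by (auto simp: q_def)
  moreover have "c \<le> cmp_angle x (snd g r) (snd k r)"
    unfolding c_def using r st0 st1 by (intro alex_angle_le_cmp_angle[OF cat g k]) auto
  ultimately show False using c by simp
qed

end

section \<open>The tangent cone\<close>

lemma seq_angle_const:
  "seq_angle x (\<lambda>n. g) (\<lambda>n. h) = alex_angle x g h"
  by (simp add: seq_angle_def)

context
  fixes x :: "'a::metric_space"
  assumes cat: "CAT0_ineq TYPE('a)"
begin

lemma dir_seqsD: "\<sigma> \<in> dir_seqs x \<Longrightarrow> \<sigma> n \<in> geods_from x"
  by (simp add: dir_seqs_def)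

lemma const_dir_seqs: "g \<in> geods_from x \<Longrightarrow> (\<lambda>n. g) \<in> dir_seqs x"
  unfolding dir_seqs_def using alex_angle_self[OF cat] by auto

lemma alex_angle_diff_le:
  assumes "g \<in> geods_from x" "g' \<in> geods_from x" "h \<in> geods_from x" "h' \<in> geods_from x"
  shows "\<bar>alex_angle x g h - alex_angle x g' h'\<bar> \<le> alex_angle x g g' + alex_angle x h h'"
  using alex_angle_triangle[OF cat assms(1,2,3)] alex_angle_triangle[OF cat assms(2,4,3)]
    alex_angle_triangle[OF cat assms(2,1,4)] alex_angle_triangle[OF cat assms(1,3,4)]
    alex_angle_commute[OF cat assms(4,3)] alex_angle_commute[OF cat assms(2,1)]
  by linarith

lemma seq_angle_LIMSEQ:
  assumes s: "\<sigma> \<in> dir_seqs x" and t: "\<tau> \<in> dir_seqs x"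
  shows "(\<lambda>n. alex_angle x (\<sigma> n) (\<tau> n)) \<longlonglongrightarrow> seq_angle x \<sigma> \<tau>"
proof -
  have "Cauchy (\<lambda>n. alex_angle x (\<sigma> n) (\<tau> n))"
  proof (rule CauchyI)
    fix e :: real assume e: "e > 0"
    obtain N1 where N1: "\<forall>m\<ge>N1. \<forall>n\<ge>N1. alex_angle x (\<sigma> m) (\<sigma> n) < e / 2"
      using s half_gt_zero[OF e] unfolding dir_seqs_def by blast
    obtain N2 where N2: "\<forall>m\<ge>N2. \<forall>n\<ge>N2. alex_angle x (\<tau> m) (\<tau> n) < e / 2"
      using t half_gt_zero[OF e] unfolding dir_seqs_def by blast
    have "norm (alex_angle x (\<sigma> m) (\<tau> m) - alex_angle x (\<sigma> n) (\<tau> n)) < e"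
      if "max N1 N2 \<le> m" "max N1 N2 \<le> n" for m n
      using that N1 N2 alex_angle_diff_le[OF dir_seqsD[OF s, of m] dir_seqsD[OF s, of n]
          dir_seqsD[OF t, of m] dir_seqsD[OF t, of n]]
      by fastforce
    then show "\<exists>M. \<forall>m\<ge>M. \<forall>n\<ge>M. norm (alex_angle x (\<sigma> m) (\<tau> m) - alex_angle x (\<sigma> n) (\<tau> n)) < e"
      by blast
  qed
  then show ?thesis unfolding seq_angle_def Cauchy_convergent_iff convergent_LIMSEQ_iff .
qed

lemma seq_angle_bounds:
  assumes s: "\<sigma> \<in> dir_seqs x" and t: "\<tau> \<in> dir_seqs x"
  shows "0 \<le> seq_angle x \<sigma> \<tau>" "seq_angle x \<sigma> \<tau> \<le> pi"
  using LIMSEQ_le_const[OF seq_angle_LIMSEQ[OF s t]] LIMSEQ_le_const2[OF seq_angle_LIMSEQ[OF s t]]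
    alex_angle_bounds[OF cat dir_seqsD[OF s] dir_seqsD[OF t]]
  by auto

lemma seq_angle_commute:
  assumes s: "\<sigma> \<in> dir_seqs x" and t: "\<tau> \<in> dir_seqs x"
  shows "seq_angle x \<sigma> \<tau> = seq_angle x \<tau> \<sigma>"
  unfolding seq_angle_def
  using alex_angle_commute[OF cat dir_seqsD[OF s] dir_seqsD[OF t]] by simp

lemma seq_angle_self: "\<sigma> \<in> dir_seqs x \<Longrightarrow> seq_angle x \<sigma> \<sigma> = 0"
  unfolding seq_angle_def using alex_angle_self[OF cat dir_seqsD] by simp

lemma seq_angle_triangle:
  assumes "\<sigma> \<in> dir_seqs x" "\<tau> \<in> dir_seqs x" "\<rho> \<in> dir_seqs x"
  shows "seq_angle x \<sigma> \<rho> \<le> seq_angle x \<sigma> \<tau> + seq_angle x \<tau> \<rho>"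
  using alex_angle_triangle[OF cat dir_seqsD[OF assms(1)] dir_seqsD[OF assms(2)] dir_seqsD[OF assms(3)]]
  by (intro LIMSEQ_le[OF seq_angle_LIMSEQ[OF assms(1,3)]
        tendsto_add[OF seq_angle_LIMSEQ[OF assms(1,2)] seq_angle_LIMSEQ[OF assms(2,3)]]]) auto

end

definition some_rep :: "'a tvec \<Rightarrow> 'a trep" where
  "some_rep U = (SOME u. u \<in> U)"

lemma treps_fst_nonneg: "v \<in> treps x \<Longrightarrow> fst v \<ge> 0"
  by (auto simp: treps_def)

lemma treps_snd: "v \<in> treps x \<Longrightarrow> fst v > 0 \<Longrightarrow> snd v \<in> dir_seqs x"
  by (auto simp: treps_def)

lemma treps_scale: "v \<in> treps x \<Longrightarrow> c > 0 \<Longrightarrow> (c * fst v, snd v) \<in> treps x"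
  by (auto simp: treps_def)

lemma rep_dist_zero_left: "fst v = 0 \<Longrightarrow> w \<in> treps x \<Longrightarrow> rep_dist x v w = fst w"
  using treps_fst_nonneg[of w x] by (simp add: rep_dist_def)

lemma rep_dist_zero_right: "fst w = 0 \<Longrightarrow> v \<in> treps x \<Longrightarrow> rep_dist x v w = fst v"
  using treps_fst_nonneg[of v x] by (simp add: rep_dist_def)

lemma rep_inner_bound: "u \<in> treps x \<Longrightarrow> v \<in> treps x \<Longrightarrow> \<bar>rep_inner x u v\<bar> \<le> fst u * fst v"
  using treps_fst_nonneg[of u x] treps_fst_nonneg[of v x] abs_cos_le_one[of "seq_angle x (snd u) (snd v)"]
  by (simp add: rep_inner_def abs_mult mult_left_le)

lemma abs_cos_diff_le:
  fixes t s \<theta>1 \<theta>2 \<phi> :: real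
  assumes "0 \<le> t" "0 \<le> s" "\<phi> \<le> pi" "\<bar>\<theta>1 - \<theta>2\<bar> \<le> \<phi>"
  shows "\<bar>t * cos \<theta>1 - s * cos \<theta>2\<bar> \<le> sqrt (t\<^sup>2 + s\<^sup>2 - 2 * t * s * cos \<phi>)"
proof -
  have "(t * cos \<theta>1 - s * cos \<theta>2)\<^sup>2 + (t * sin \<theta>1 - s * sin \<theta>2)\<^sup>2
      = t\<^sup>2 * ((sin \<theta>1)\<^sup>2 + (cos \<theta>1)\<^sup>2) + s\<^sup>2 * ((sin \<theta>2)\<^sup>2 + (cos \<theta>2)\<^sup>2)
        - 2 * t * s * (cos \<theta>1 * cos \<theta>2 + sin \<theta>1 * sin \<theta>2)"
    by algebra
  then have pyth: "(t * cos \<theta>1 - s * cos \<theta>2)\<^sup>2 + (t * sin \<theta>1 - s * sin \<theta>2)\<^sup>2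
      = t\<^sup>2 + s\<^sup>2 - 2 * t * s * cos \<bar>\<theta>1 - \<theta>2\<bar>"
    by (simp add: cos_diff)
  have "cos \<phi> \<le> cos \<bar>\<theta>1 - \<theta>2\<bar>" using assms by (intro cos_monotone_0_pi_le) auto
  then have "2 * t * s * cos \<phi> \<le> 2 * t * s * cos \<bar>\<theta>1 - \<theta>2\<bar>" using assms by (simp add: mult_left_mono)
  then have "(t * cos \<theta>1 - s * cos \<theta>2)\<^sup>2 \<le> t\<^sup>2 + s\<^sup>2 - 2 * t * s * cos \<phi>"
    using pyth zero_le_power2[of "t * sin \<theta>1 - s * sin \<theta>2"] by linarith
  then show ?thesis using real_sqrt_le_mono by fastforce
qed

context
  fixes x :: "'a::metric_space"
  assumes cat: "CAT0_ineq TYPE('a)"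
begin

lemma rep_dist_self: "v \<in> treps x \<Longrightarrow> rep_dist x v v = 0"
  using seq_angle_self[OF cat treps_snd] treps_fst_nonneg[of v x]
  by (cases "fst v = 0") (auto simp: rep_dist_def power2_eq_square)

lemma rep_dist_eq_0D:
  assumes v: "v \<in> treps x" and w: "w \<in> treps x" and d: "rep_dist x v w = 0"
  shows "fst v = fst w" and "fst v > 0 \<Longrightarrow> seq_angle x (snd v) (snd w) = 0"
proof -
  consider "fst v = 0" | "fst w = 0" | "fst v > 0" "fst w > 0"
    using treps_fst_nonneg[OF v] treps_fst_nonneg[OF w] by linarith
  then have "fst v = fst w \<and> (fst v > 0 \<longrightarrow> seq_angle x (snd v) (snd w) = 0)"
  proof cases
    case 3
    define \<theta> where "\<theta> = seq_angle x (snd v) (snd w)"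
    have \<theta>: "0 \<le> \<theta>" "\<theta> \<le> pi"
      using seq_angle_bounds[OF cat treps_snd[OF v] treps_snd[OF w]] 3 by (auto simp: \<theta>_def)
    have split: "(fst v)\<^sup>2 + (fst w)\<^sup>2 - 2 * fst v * fst w * cos \<theta>
        = (fst v - fst w)\<^sup>2 + 2 * fst v * fst w * (1 - cos \<theta>)"
      by (simp add: power2_eq_square algebra_simps)
    have nonneg: "2 * fst v * fst w * (1 - cos \<theta>) \<ge> 0" using 3 by simp
    have "(fst v)\<^sup>2 + (fst w)\<^sup>2 - 2 * fst v * fst w * cos \<theta> = 0"
      using d split nonneg by (simp add: rep_dist_def \<theta>_def)
    then have "(fst v - fst w)\<^sup>2 = 0" "2 * fst v * fst w * (1 - cos \<theta>) = 0"
      using split nonneg by (metis add_nonneg_eq_0_iff zero_le_power2)+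
    then have "fst v = fst w" "cos \<theta> = 1" using 3 by simp_all
    then show ?thesis using arccos_cos[OF \<theta>] by (simp add: \<theta>_def)
  qed (use d rep_dist_zero_left[OF _ w] rep_dist_zero_right[OF _ v] in auto)
  then show "fst v = fst w" "fst v > 0 \<Longrightarrow> seq_angle x (snd v) (snd w) = 0" by auto
qed

lemma rep_dist_eq_0_cong:
  assumes v: "v \<in> treps x" and w: "w \<in> treps x" and z: "z \<in> treps x" and d: "rep_dist x v w = 0"
  shows "rep_dist x v z = rep_dist x w z" "rep_inner x v z = rep_inner x w z"
proof -
  note e = rep_dist_eq_0D[OF v w d]
  have "seq_angle x (snd v) (snd z) = seq_angle x (snd w) (snd z)" if "fst v > 0" "fst z > 0"
  proof -
    have sv: "snd v \<in> dir_seqs x" and sw: "snd w \<in> dir_seqs x" and sz: "snd z \<in> dir_seqs x"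
      using treps_snd[OF v] treps_snd[OF w] treps_snd[OF z] e(1) that by auto
    show ?thesis
      using seq_angle_triangle[OF cat sv sw sz] seq_angle_triangle[OF cat sw sv sz]
        seq_angle_commute[OF cat sw sv] e(2)[OF that(1)] by simp
  qed
  moreover have "fst v = 0 \<or> fst z = 0 \<or> (fst v > 0 \<and> fst z > 0)"
    using treps_fst_nonneg[OF v] treps_fst_nonneg[OF z] by auto
  ultimately show "rep_dist x v z = rep_dist x w z" "rep_inner x v z = rep_inner x w z"
    using e(1) by (auto simp: rep_dist_def rep_inner_def)
qed

lemma rep_inner_commute:
  assumes v: "v \<in> treps x" and w: "w \<in> treps x"
  shows "rep_inner x v w = rep_inner x w v"
proof (cases "fst v > 0 \<and> fst w > 0")
  case True
  then show ?thesis
    using seq_angle_commute[OF cat treps_snd[OF v] treps_snd[OF w]] by (simp add: rep_inner_def)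
next
  case False
  then have "fst v = 0 \<or> fst w = 0" using treps_fst_nonneg[OF v] treps_fst_nonneg[OF w] by auto
  then show ?thesis by (auto simp: rep_inner_def)
qed

lemma some_rep_tclass:
  assumes v: "v \<in> treps x"
  shows "some_rep (tclass x v) \<in> treps x" "rep_dist x v (some_rep (tclass x v)) = 0"
proof -
  have "v \<in> tclass x v" using rep_dist_self[OF v] v by (simp add: tclass_def)
  then have "some_rep (tclass x v) \<in> tclass x v" unfolding some_rep_def by (rule someI)
  then show "some_rep (tclass x v) \<in> treps x" "rep_dist x v (some_rep (tclass x v)) = 0"
    by (auto simp: tclass_def)
qed

lemma tclass_eq:
  assumes v: "v \<in> treps x" and w: "w \<in> treps x" and d: "rep_dist x v w = 0"
  shows "tclass x v = tclass x w"
  unfolding tclass_def using rep_dist_eq_0_cong(1)[OF v w _ d] by auto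

lemma tangent_space_some_rep:
  assumes "U \<in> tangent_space x"
  shows "some_rep U \<in> treps x" "U = tclass x (some_rep U)"
proof -
  obtain v where v: "v \<in> treps x" "U = tclass x v" using assms by (auto simp: tangent_space_def)
  note a = some_rep_tclass[OF v(1)]
  show "some_rep U \<in> treps x" using a v by simp
  show "U = tclass x (some_rep U)" using tclass_eq[OF v(1) a] v by simp
qed

lemma tinner_tclass:
  assumes v: "v \<in> treps x" and w: "w \<in> treps x"
  shows "tinner x (tclass x v) (tclass x w) = rep_inner x v w"
proof -
  note a = some_rep_tclass[OF v] and b = some_rep_tclass[OF w]
  have "tinner x (tclass x v) (tclass x w) = rep_inner x (some_rep (tclass x v)) (some_rep (tclass x w))"
    by (simp add: tinner_def some_rep_def)
  also have "\<dots> = rep_inner x v (some_rep (tclass x w))"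
    using rep_dist_eq_0_cong(2)[OF v a(1) b(1) a(2)] by simp
  also have "\<dots> = rep_inner x (some_rep (tclass x w)) v" using rep_inner_commute[OF v b(1)] .
  also have "\<dots> = rep_inner x w v" using rep_dist_eq_0_cong(2)[OF w b(1) v b(2)] by simp
  also have "\<dots> = rep_inner x v w" using rep_inner_commute[OF w v] .
  finally show ?thesis .
qed

lemma tnorm_tclass:
  assumes v: "v \<in> treps x"
  shows "tnorm x (tclass x v) = fst v"
  using rep_dist_eq_0D(1)[OF v some_rep_tclass[OF v]] by (simp add: tnorm_def some_rep_def)

lemma tscale_tclass:
  assumes v: "v \<in> treps x" and c: "c > 0"
  shows "tscale x c (tclass x v) = tclass x (c * fst v, snd v)"
proof -
  note a = some_rep_tclass[OF v]
  let ?u = "some_rep (tclass x v)"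
  have f: "fst ?u = fst v" using rep_dist_eq_0D(1)[OF v a] by simp
  have "rep_dist x (c * fst v, snd v) (c * fst v, snd ?u) = 0"
    using rep_dist_eq_0D(2)[OF v a] treps_fst_nonneg[OF v]
    by (cases "fst v = 0") (auto simp: rep_dist_def power2_eq_square)
  then have "tclass x (c * fst v, snd v) = tclass x (c * fst v, snd ?u)"
    using treps_scale[OF v c] treps_scale[OF a(1) c] f by (intro tclass_eq) auto
  then show ?thesis unfolding tscale_def Let_def some_rep_def[symmetric] using f by simp
qed

lemma rep_inner_lipschitz:
  assumes u: "u \<in> treps x" and v: "v \<in> treps x" and w: "w \<in> treps x"
  shows "\<bar>rep_inner x u v - rep_inner x u w\<bar> \<le> fst u * rep_dist x v w"
proof -
  consider "fst u = 0" | "fst v = 0" | "fst w = 0" | "fst u > 0" "fst v > 0" "fst w > 0"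
    using treps_fst_nonneg[OF u] treps_fst_nonneg[OF v] treps_fst_nonneg[OF w] by linarith
  then show ?thesis
  proof cases
    case 4
    have su: "snd u \<in> dir_seqs x" and sv: "snd v \<in> dir_seqs x" and sw: "snd w \<in> dir_seqs x"
      using treps_snd[OF u] treps_snd[OF v] treps_snd[OF w] 4 by auto
    define \<theta>1 where "\<theta>1 = seq_angle x (snd u) (snd v)"
    define \<theta>2 where "\<theta>2 = seq_angle x (snd u) (snd w)"
    define \<phi> where "\<phi> = seq_angle x (snd v) (snd w)"
    have "\<bar>\<theta>1 - \<theta>2\<bar> \<le> \<phi>"
      using seq_angle_triangle[OF cat su sv sw] seq_angle_triangle[OF cat su sw sv]
        seq_angle_commute[OF cat sw sv] by (simp add: \<theta>1_def \<theta>2_def \<phi>_def)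
    then have "\<bar>fst v * cos \<theta>1 - fst w * cos \<theta>2\<bar> \<le> rep_dist x v w"
      unfolding rep_dist_def \<phi>_def[symmetric] using seq_angle_bounds[OF cat sv sw] 4
      by (intro abs_cos_diff_le) (auto simp: \<phi>_def)
    then have "fst u * \<bar>fst v * cos \<theta>1 - fst w * cos \<theta>2\<bar> \<le> fst u * rep_dist x v w"
      using 4 by (simp add: mult_left_mono)
    moreover have "rep_inner x u v - rep_inner x u w = fst u * (fst v * cos \<theta>1 - fst w * cos \<theta>2)"
      by (simp add: rep_inner_def \<theta>1_def \<theta>2_def algebra_simps)
    ultimately show ?thesis using 4 by (simp add: abs_mult)
  qed (use rep_inner_bound[OF u v] rep_inner_bound[OF u w] rep_dist_zero_left[OF _ w]
         rep_dist_zero_right[OF _ v] in \<open>auto simp: rep_inner_def\<close>)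
qed

lemma tinner_lipschitz:
  assumes U: "U \<in> tangent_space x" and V: "V \<in> tangent_space x" and W: "W \<in> tangent_space x"
  shows "\<bar>tinner x U V - tinner x W V\<bar> \<le> tnorm x V * tdist x U W"
proof -
  have a: "some_rep U \<in> treps x" "some_rep V \<in> treps x" "some_rep W \<in> treps x"
    using tangent_space_some_rep U V W by auto
  have "tinner x U V = rep_inner x (some_rep V) (some_rep U)"
    "tinner x W V = rep_inner x (some_rep V) (some_rep W)"
    using rep_inner_commute[OF a(1,2)] rep_inner_commute[OF a(3,2)]
    by (simp_all add: tinner_def some_rep_def)
  moreover have "tnorm x V = fst (some_rep V)" "tdist x U W = rep_dist x (some_rep U) (some_rep W)"
    by (simp_all add: tnorm_def tdist_def some_rep_def)
  ultimately show ?thesis using rep_inner_lipschitz[OF a(2,1,3)] by simp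
qed

lemma tnorm_nonneg: "U \<in> tangent_space x \<Longrightarrow> tnorm x U \<ge> 0"
  using treps_fst_nonneg[OF tangent_space_some_rep(1)] by (simp add: tnorm_def some_rep_def)

lemma tdist_tzero:
  assumes U: "U \<in> tangent_space x"
  shows "tdist x U (tzero x) = tnorm x U"
proof -
  have z: "(0, undefined) \<in> treps x" by (simp add: treps_def)
  have "fst (some_rep (tzero x)) = 0"
    using rep_dist_eq_0D(1)[OF z some_rep_tclass[OF z]] by (simp add: tzero_def)
  then show ?thesis
    using rep_dist_zero_right tangent_space_some_rep(1)[OF U]
    by (simp add: tdist_def tnorm_def some_rep_def)
qed

end

definition log_rep :: "'a::metric_space \<Rightarrow> 'a \<Rightarrow> 'a trep" where
  "log_rep p a = (if a = p then (0, undefined) else (dist p a, \<lambda>n. (dist p a, geod_seg p a)))"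

lemma fst_log_rep: "fst (log_rep p a) = dist p a"
  by (simp add: log_rep_def)

lemma tlog_eq_tclass: "tlog p a = tclass p (log_rep p a)"
  by (simp add: tlog_def log_rep_def tzero_def)

context
  fixes p :: "'a::metric_space"
  assumes had: "hadamard_space TYPE('a)"
begin

lemma geod_seg_in_geods_from: "a \<noteq> p \<Longrightarrow> (dist p a, geod_seg p a) \<in> geods_from p"
  using geod_seg_spec[OF had, of p a] by (simp add: geods_from_def)

lemma log_rep_treps: "log_rep p a \<in> treps p"
  using const_dir_seqs[OF hadamard_spaceD(2)[OF had] geod_seg_in_geods_from]
  by (simp add: log_rep_def treps_def)

lemma tlog_in_tangent_space: "tlog p a \<in> tangent_space p"
  unfolding tlog_eq_tclass tangent_space_def using log_rep_treps by simp

lemma rep_inner_log_rep_ge: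
  "(dist p a)\<^sup>2 + (dist p b)\<^sup>2 - (dist a b)\<^sup>2 \<le> 2 * rep_inner p (log_rep p a) (log_rep p b)"
proof (cases "a = p \<or> b = p")
  case True
  then show ?thesis by (auto simp: log_rep_def rep_inner_def dist_commute)
next
  case False
  then have a: "a \<noteq> p" and b: "b \<noteq> p" by auto
  have cat: "CAT0_ineq TYPE('a)" by (rule hadamard_spaceD(2)[OF had])
  let ?ga = "(dist p a, geod_seg p a)" and ?gb = "(dist p b, geod_seg p b)"
  have "alex_angle p ?ga ?gb \<le> cmp_angle p (geod_seg p a (dist p a)) (geod_seg p b (dist p b))"
    using alex_angle_le_cmp_angle[OF cat geod_seg_in_geods_from[OF a] geod_seg_in_geods_from[OF b],
        of "dist p a" "dist p b"] a b
    by simp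
  then have "alex_angle p ?ga ?gb \<le> cmp_angle p a b" using geod_seg_spec(3)[OF had] by simp
  then have "cmp_cos p a b \<le> cos (alex_angle p ?ga ?gb)"
    using alex_angle_bounds[OF cat geod_seg_in_geods_from[OF a] geod_seg_in_geods_from[OF b]]
      cmp_angle_bounds[OF a b] cos_cmp_angle[OF a b]
    by (metis cos_monotone_0_pi_le)
  then have "2 * dist p a * dist p b * cmp_cos p a b \<le> 2 * dist p a * dist p b * cos (alex_angle p ?ga ?gb)"
    by (intro mult_left_mono) auto
  moreover have "2 * dist p a * dist p b * cmp_cos p a b = (dist p a)\<^sup>2 + (dist p b)\<^sup>2 - (dist a b)\<^sup>2"
    unfolding cmp_cos_def using a b by simp
  moreover have "rep_inner p (log_rep p a) (log_rep p b) = dist p a * dist p b * cos (alex_angle p ?ga ?gb)"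
    using a b by (simp add: log_rep_def rep_inner_def seq_angle_const)
  ultimately show ?thesis by simp
qed

lemma rep_dist_log_rep_le: "rep_dist p (log_rep p a) (log_rep p b) \<le> dist a b"
proof (cases "a = p \<or> b = p")
  case True
  then show ?thesis
    using rep_dist_zero_left[of "log_rep p a" "log_rep p b" p] rep_dist_zero_right[of "log_rep p b" "log_rep p a" p]
      log_rep_treps
    by (auto simp: fst_log_rep log_rep_def dist_commute)
next
  case False
  then have "rep_dist p (log_rep p a) (log_rep p b)
      = sqrt ((dist p a)\<^sup>2 + (dist p b)\<^sup>2 - 2 * rep_inner p (log_rep p a) (log_rep p b))"
    by (simp add: log_rep_def rep_dist_def rep_inner_def mult_ac)
  also have "\<dots> \<le> sqrt ((dist a b)\<^sup>2)"
    using rep_inner_log_rep_ge[of a b] by (intro real_sqrt_le_mono) simp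
  finally show ?thesis by simp
qed

lemma tscale_tlog: "c > 0 \<Longrightarrow> tscale p c (tlog p a) = tclass p (c * dist p a, snd (log_rep p a))"
  unfolding tlog_eq_tclass
  using tscale_tclass[OF hadamard_spaceD(2)[OF had] log_rep_treps] by (simp add: fst_log_rep)

lemma tnorm_tscale_tlog: "c > 0 \<Longrightarrow> tnorm p (tscale p c (tlog p a)) = c * dist p a"
  unfolding tscale_tlog
  using tnorm_tclass[OF hadamard_spaceD(2)[OF had] treps_scale[OF log_rep_treps]] by (simp add: fst_log_rep)

lemma tinner_tscale_tlog_ge:
  assumes c: "c > 0"
  shows "c * ((dist p a)\<^sup>2 + (dist p b)\<^sup>2 - (dist a b)\<^sup>2) \<le> 2 * tinner p (tscale p c (tlog p a)) (tlog p b)"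
proof -
  have "tinner p (tscale p c (tlog p a)) (tlog p b) = rep_inner p (c * dist p a, snd (log_rep p a)) (log_rep p b)"
    unfolding tscale_tlog[OF c] tlog_eq_tclass[of p b]
    using tinner_tclass[OF hadamard_spaceD(2)[OF had] treps_scale[OF log_rep_treps c, of a] log_rep_treps]
    by (simp add: fst_log_rep)
  also have "\<dots> = c * rep_inner p (log_rep p a) (log_rep p b)" by (simp add: rep_inner_def fst_log_rep)
  finally show ?thesis using rep_inner_log_rep_ge[of a b] c by (simp add: mult_left_mono)
qed

lemma tinner_tlog_eq_rep_inner:
  assumes U: "U \<in> tangent_space p"
  shows "tinner p U (tlog p a) = rep_inner p (some_rep U) (log_rep p a)"
proof -
  have cat: "CAT0_ineq TYPE('a)" by (rule hadamard_spaceD(2)[OF had])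
  show ?thesis
    using tinner_tclass[OF cat tangent_space_some_rep(1)[OF cat U] log_rep_treps]
      tangent_space_some_rep(2)[OF cat U]
    unfolding tlog_eq_tclass by metis
qed

lemma tinner_tlog_bound:
  assumes U: "U \<in> tangent_space p"
  shows "\<bar>tinner p U (tlog p a)\<bar> \<le> tnorm p U * dist p a"
  using rep_inner_bound[OF tangent_space_some_rep(1)[OF hadamard_spaceD(2)[OF had] U] log_rep_treps]
  by (simp add: tinner_tlog_eq_rep_inner[OF U] tnorm_def some_rep_def fst_log_rep)

lemma tinner_tlog_lipschitz:
  assumes U: "U \<in> tangent_space p"
  shows "\<bar>tinner p U (tlog p a) - tinner p U (tlog p b)\<bar> \<le> tnorm p U * dist a b"
proof -
  have cat: "CAT0_ineq TYPE('a)" by (rule hadamard_spaceD(2)[OF had])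
  have u: "some_rep U \<in> treps p" by (rule tangent_space_some_rep(1)[OF cat U])
  have "fst (some_rep U) * rep_dist p (log_rep p a) (log_rep p b) \<le> fst (some_rep U) * dist a b"
    using rep_dist_log_rep_le treps_fst_nonneg[OF u] by (simp add: mult_left_mono)
  then show ?thesis
    using rep_inner_lipschitz[OF cat u log_rep_treps log_rep_treps, of a b]
    by (simp add: tinner_tlog_eq_rep_inner[OF U] tnorm_def some_rep_def)
qed

end

section \<open>Resolvents\<close>

lemma le_sqrt_of_quadratic_le:
  fixes e \<delta> K :: real
  assumes "0 \<le> e" "0 \<le> \<delta>" "0 \<le> K" and quad: "e\<^sup>2 \<le> e * \<delta> + K"
  shows "e \<le> \<delta> + sqrt K"
proof (rule ccontr)
  assume "\<not> e \<le> \<delta> + sqrt K"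
  then have gt: "\<delta> + sqrt K < e" by simp
  have sK: "0 \<le> sqrt K" "sqrt K * sqrt K = K" using assms(3) by simp_all
  have "e * (\<delta> + sqrt K) < e * e" using gt sK assms(2) by (intro mult_strict_left_mono) linarith+
  moreover have "sqrt K * sqrt K \<le> e * sqrt K" using gt sK assms(2) by (intro mult_right_mono) auto
  ultimately have "e * \<delta> + K < e\<^sup>2" using sK by (simp add: power2_eq_square algebra_simps)
  then show False using quad by simp
qed

context
  fixes B :: "'a::metric_space vfield" and l :: real
  assumes had: "hadamard_space TYPE('a)"
    and mono: "monotone_vf B" and surj: "surjectivity_cond B" and l: "l > 0"
begin

lemma resolvent_pair_ineq:
  assumes z1: "tscale z1 (1 / l) (tlog z1 x1) \<in> B z1" and z2: "tscale z2 (1 / l) (tlog z2 x2) \<in> B z2"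
  shows "2 * (dist z1 z2)\<^sup>2 \<le> (dist x1 z2)\<^sup>2 - (dist z2 x2)\<^sup>2 + (dist x2 z1)\<^sup>2 - (dist z1 x1)\<^sup>2"
proof -
  have c: "1 / l > 0" using l by simp
  have "tinner z1 (tscale z1 (1 / l) (tlog z1 x1)) (tlog z1 z2)
      \<le> - tinner z2 (tscale z2 (1 / l) (tlog z2 x2)) (tlog z2 z1)"
    using mono z1 z2 unfolding monotone_vf_def by blast
  then have "(1 / l) * ((dist z1 x1)\<^sup>2 + (dist z1 z2)\<^sup>2 - (dist x1 z2)\<^sup>2
      + ((dist z2 x2)\<^sup>2 + (dist z2 z1)\<^sup>2 - (dist x2 z1)\<^sup>2)) \<le> 0"
    using tinner_tscale_tlog_ge[OF had c, of z1 x1 z2] tinner_tscale_tlog_ge[OF had c, of z2 x2 z1]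
    by (simp add: distrib_left)
  then show ?thesis using l by (simp add: divide_le_0_iff dist_commute)
qed

lemma resolvent_in: "tscale (resolvent B l x) (1 / l) (tlog (resolvent B l x) x) \<in> B (resolvent B l x)"
proof -
  obtain z where z: "tscale z (1 / l) (tlog z x) \<in> B z"
    using surj l unfolding surjectivity_cond_def by blast
  have "z' = z" if "tscale z' (1 / l) (tlog z' x) \<in> B z'" for z'
    using resolvent_pair_ineq[OF that z] by (simp add: dist_commute)
  then have "\<exists>!z. tscale z (1 / l) (tlog z x) \<in> B z" using z by blast
  then show ?thesis unfolding resolvent_def by (rule theI')
qed

lemma yosida_in: "yosida B l x \<in> B (resolvent B l x)"
  unfolding yosida_def by (rule resolvent_in)

lemma tnorm_yosida: "tnorm (resolvent B l x) (yosida B l x) = dist x (resolvent B l x) / l"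
  unfolding yosida_def using tnorm_tscale_tlog[OF had] l by (simp add: dist_commute)

lemma dist_resolvent_le:
  "dist (resolvent B l x) (resolvent B l x') \<le>
     dist x x' + sqrt (2 * (dist x x')\<^sup>2 + 2 * dist (resolvent B l x) x * dist x x')"
proof -
  define p where "p = resolvent B l x"
  define q where "q = resolvent B l x'"
  define \<delta> where "\<delta> = dist x x'"
  define A where "A = dist p x"
  define A' where "A' = dist q x'"
  define e where "e = dist p q"
  have nn: "0 \<le> \<delta>" "0 \<le> A" "0 \<le> A'" "0 \<le> e" by (simp_all add: \<delta>_def A_def A'_def e_def)
  have "dist x q \<le> \<delta> + A'" "dist x' p \<le> \<delta> + A"
    using dist_triangle[of x q x'] dist_triangle[of x' p x] by (simp_all add: \<delta>_def A_def A'_def dist_commute)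
  then have "(dist x q)\<^sup>2 \<le> (\<delta> + A')\<^sup>2" "(dist x' p)\<^sup>2 \<le> (\<delta> + A)\<^sup>2"
    by (simp_all add: power_mono)
  moreover have "2 * e\<^sup>2 \<le> (dist x q)\<^sup>2 - A'\<^sup>2 + (dist x' p)\<^sup>2 - A\<^sup>2"
    using resolvent_pair_ineq[OF resolvent_in[of x] resolvent_in[of x']]
    by (simp add: p_def q_def e_def A_def A'_def dist_commute)
  ultimately have "2 * e\<^sup>2 \<le> (\<delta> + A')\<^sup>2 - A'\<^sup>2 + (\<delta> + A)\<^sup>2 - A\<^sup>2" by linarith
  also have "\<dots> = 2 * \<delta>\<^sup>2 + 2 * \<delta> * (A + A')" by (simp add: power2_eq_square algebra_simps)
  finally have e2: "e\<^sup>2 \<le> \<delta>\<^sup>2 + \<delta> * (A + A')" by simp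
  have "A' \<le> e + A + \<delta>"
    using dist_triangle[of q x' p] dist_triangle[of p x' x] by (simp add: \<delta>_def A_def A'_def e_def dist_commute)
  then have "\<delta> * (A + A') \<le> \<delta> * (e + 2 * A + \<delta>)" using nn by (intro mult_left_mono) auto
  with e2 have "e\<^sup>2 \<le> e * \<delta> + (2 * \<delta>\<^sup>2 + 2 * A * \<delta>)" by (simp add: power2_eq_square algebra_simps)
  then have "e \<le> \<delta> + sqrt (2 * \<delta>\<^sup>2 + 2 * A * \<delta>)" using nn by (intro le_sqrt_of_quadratic_le) auto
  then show ?thesis unfolding e_def \<delta>_def A_def p_def q_def by (simp add: mult.commute)
qed

lemma resolvent_LIMSEQ:
  assumes "X \<longlonglongrightarrow> x"
  shows "(\<lambda>k. resolvent B l (X k)) \<longlonglongrightarrow> resolvent B l x"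
proof -
  define D where "D = dist (resolvent B l x) x"
  have "(\<lambda>k. dist (X k) x) \<longlonglongrightarrow> 0" using assms tendsto_dist_iff by blast
  then have d: "(\<lambda>k. dist x (X k)) \<longlonglongrightarrow> 0" by (simp add: dist_commute)
  have "(\<lambda>k. 2 * (dist x (X k))\<^sup>2 + 2 * D * dist x (X k)) \<longlonglongrightarrow> 2 * 0\<^sup>2 + 2 * D * 0"
    by (intro tendsto_add tendsto_mult tendsto_power tendsto_const d)
  then have "(\<lambda>k. sqrt (2 * (dist x (X k))\<^sup>2 + 2 * D * dist x (X k))) \<longlonglongrightarrow> 0"
    using tendsto_real_sqrt by fastforce
  then have bound: "(\<lambda>k. dist x (X k) + sqrt (2 * (dist x (X k))\<^sup>2 + 2 * D * dist x (X k))) \<longlonglongrightarrow> 0"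
    using tendsto_add[OF d] by fastforce
  have "dist (resolvent B l (X k)) (resolvent B l x)
      \<le> dist x (X k) + sqrt (2 * (dist x (X k))\<^sup>2 + 2 * D * dist x (X k))" for k
    using dist_resolvent_le[of x "X k"] by (simp add: D_def dist_commute)
  then have "(\<lambda>k. dist (resolvent B l (X k)) (resolvent B l x)) \<longlonglongrightarrow> 0"
    by (intro tendsto_sandwich[OF _ _ tendsto_const bound]) auto
  then show ?thesis using tendsto_dist_iff by blast
qed

end

lemma sq_diff_le_of_le_add:
  fixes a b e :: real
  assumes "0 \<le> a" "0 \<le> b" "0 \<le> e" and le: "a \<le> e + b"
  shows "a\<^sup>2 - b\<^sup>2 \<le> 2 * e * a"
proof (cases "a \<le> b")
  case True
  then have "a\<^sup>2 \<le> b\<^sup>2" using assms by (simp add: power_mono)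
  moreover have "0 \<le> 2 * e * a" using assms by simp
  ultimately show ?thesis by linarith
next
  case False
  have "a\<^sup>2 - b\<^sup>2 = (a - b) * (a + b)" by (simp add: power2_eq_square algebra_simps)
  also have "\<dots> \<le> e * (2 * a)" using le False assms by (intro mult_mono) auto
  finally show ?thesis by simp
qed

context
  fixes B :: "'a::metric_space vfield" and l \<alpha> :: real and z :: 'a and u :: "'a tvec"
  assumes had: "hadamard_space TYPE('a)"
    and mono: "monotone_vf B" and surj: "surjectivity_cond B" and l: "l > 0"
    and strong: "strongly_monotone_vf B \<alpha>"
    and u: "u \<in> B z" and uT: "u \<in> tangent_space z"
begin

lemma resolvent_dist_sq_le:
  fixes x :: 'a
  defines "y \<equiv> resolvent B l x"
  shows "(dist y z)\<^sup>2 + 2 * l * \<alpha> * (dist y z)\<^sup>2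
           \<le> (dist x z)\<^sup>2 - 2 * l * tinner z u (tlog z x) + l\<^sup>2 * (tnorm z u)\<^sup>2"
proof -
  define v where "v = yosida B l x"
  define N where "N = tnorm z u"
  define G where "G = tinner z u (tlog z x)"
  define e where "e = dist x y"
  have v: "v = tscale y (1 / l) (tlog y x)" "v \<in> B y"
    using yosida_in[OF had mono surj l] by (simp_all add: v_def y_def yosida_def)
  have "(1 / l) * (e\<^sup>2 + (dist y z)\<^sup>2 - (dist x z)\<^sup>2) \<le> 2 * tinner y v (tlog y z)"
    unfolding v(1) using tinner_tscale_tlog_ge[OF had, of "1 / l" y x z] l by (simp add: e_def dist_commute)
  then have cos_law: "e\<^sup>2 + (dist y z)\<^sup>2 - (dist x z)\<^sup>2 \<le> 2 * l * tinner y v (tlog y z)"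
    using l by (simp add: field_simps)
  have "tinner y v (tlog y z) \<le> - tinner z u (tlog z y) - \<alpha> * (dist y z)\<^sup>2"
    using strong v(2) u unfolding strongly_monotone_vf_def by blast
  also have "\<dots> \<le> - G + N * e - \<alpha> * (dist y z)\<^sup>2"
    using tinner_tlog_lipschitz[OF had uT, of x y] by (simp add: G_def N_def e_def abs_le_iff)
  finally have "2 * l * tinner y v (tlog y z) \<le> 2 * l * (- G + N * e - \<alpha> * (dist y z)\<^sup>2)"
    using l by (intro mult_left_mono) auto
  then have monotone_step:
    "2 * l * tinner y v (tlog y z) \<le> - 2 * l * G + 2 * (l * N) * e - 2 * l * \<alpha> * (dist y z)\<^sup>2"
    by (simp add: algebra_simps)
  have "2 * (l * N) * e \<le> (l * N)\<^sup>2 + e\<^sup>2" by (rule sum_squares_bound)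
  then show ?thesis using cos_law monotone_step
    unfolding G_def[symmetric] N_def[symmetric] power_mult_distrib by linarith
qed

lemma resolvent_dist_sq_bound:
  "(dist (resolvent B l x) z)\<^sup>2 \<le> 2 * (dist x z)\<^sup>2 + 2 * l\<^sup>2 * (tnorm z u)\<^sup>2"
proof -
  define N where "N = tnorm z u"
  define G where "G = tinner z u (tlog z x)"
  have "0 \<le> 2 * l * \<alpha> * (dist (resolvent B l x) z)\<^sup>2"
    using l strong by (simp add: strongly_monotone_vf_def)
  moreover have "- G \<le> N * dist x z"
    using tinner_tlog_bound[OF had uT, of x] by (simp add: G_def N_def dist_commute abs_le_iff)
  then have "- 2 * l * G \<le> 2 * (dist x z) * (l * N)"
    using l mult_left_mono[of "- G" "N * dist x z" "2 * l"] by (simp add: algebra_simps)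
  moreover have "2 * (dist x z) * (l * N) \<le> (dist x z)\<^sup>2 + (l * N)\<^sup>2" by (rule sum_squares_bound)
  moreover note resolvent_dist_sq_le[of x]
  ultimately show ?thesis
    unfolding G_def[symmetric] N_def[symmetric] power_mult_distrib by linarith
qed

lemma resolvent_step_ineq:
  fixes x :: 'a
  assumes \<alpha>1: "\<alpha> \<le> 1"
  defines "y \<equiv> resolvent B l x"
  shows "(dist y z)\<^sup>2 \<le> (1 + 2 * l\<^sup>2) * (dist x z)\<^sup>2 - 2 * l * \<alpha> * (dist x z)\<^sup>2
            - 2 * l * tinner z u (tlog z x) + l\<^sup>2 * ((tnorm z u)\<^sup>2 + 2 * (tnorm y (yosida B l x))\<^sup>2)"
proof -
  define dx where "dx = dist x z"
  define dy where "dy = dist y z"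
  define w where "w = tnorm y (yosida B l x)"
  have \<alpha>: "0 < \<alpha>" using strong by (simp add: strongly_monotone_vf_def)
  have e: "dist x y = l * w" using tnorm_yosida[OF had mono surj l] l by (simp add: w_def y_def)
  have nn: "0 \<le> dx" "0 \<le> dy" "0 \<le> l * w" by (simp_all add: dx_def dy_def flip: e)
  have tri: "dx \<le> l * w + dy" using dist_triangle[of x z y] e by (simp add: dx_def dy_def)
  have "dx\<^sup>2 - dy\<^sup>2 \<le> 2 * (l * w) * dx" using nn tri by (intro sq_diff_le_of_le_add)
  then have "2 * l * \<alpha> * (dx\<^sup>2 - dy\<^sup>2) \<le> 2 * l * \<alpha> * (2 * (l * w) * dx)"
    using l \<alpha> by (intro mult_left_mono) auto
  also have "\<dots> = \<alpha> * (2 * l\<^sup>2 * (2 * w * dx))" by (simp add: power2_eq_square algebra_simps)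
  also have "\<dots> \<le> 2 * l\<^sup>2 * (2 * w * dx)"
  proof (rule mult_left_le_one_le)
    have "0 \<le> w" using nn(3) l by (simp add: zero_le_mult_iff)
    then show "0 \<le> 2 * l\<^sup>2 * (2 * w * dx)" using nn(1) by simp
  qed (use \<alpha> \<alpha>1 in auto)
  also have "\<dots> \<le> 2 * l\<^sup>2 * (w\<^sup>2 + dx\<^sup>2)"
    using sum_squares_bound[of w dx] by (intro mult_left_mono) auto
  finally have "2 * l * \<alpha> * dx\<^sup>2 - 2 * l * \<alpha> * dy\<^sup>2 \<le> 2 * l\<^sup>2 * w\<^sup>2 + 2 * l\<^sup>2 * dx\<^sup>2"
    by (simp add: algebra_simps)
  then show ?thesis
    using resolvent_dist_sq_le[of x] unfolding y_def[symmetric] dx_def[symmetric] dy_def[symmetric] w_def[symmetric]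
    by (simp add: algebra_simps)
qed

end

section \<open>Measurability\<close>

lemma separable_dense_seq:
  fixes D :: "'a::metric_space set"
  assumes "countable D" "closure D = UNIV"
  obtains d :: "nat \<Rightarrow> 'a" where "\<And>y e. e > 0 \<Longrightarrow> \<exists>j. dist y (d j) < e"
proof -
  have ne: "D \<noteq> {}" using assms(2) by auto
  have dense: "\<exists>j. dist y (from_nat_into D j) < e" if e: "e > 0" for y e
  proof -
    obtain z where "z \<in> D" "dist z y < e" using assms(2) e closure_approachable by blast
    then show ?thesis using range_from_nat_into[OF ne assms(1)] by (metis dist_commute rangeE)
  qed
  show ?thesis by (rule that) (rule dense)
qed

lemma borel_measurable_caratheodory:
  fixes f :: "'e \<Rightarrow> 'a::metric_space \<Rightarrow> 'b::metric_space"
  assumes sep: "\<exists>D::'a set. countable D \<and> closure D = UNIV"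
    and meas: "\<And>y. (\<lambda>s. f s y) \<in> borel_measurable M"
    and cont: "\<And>s X y. s \<in> space M \<Longrightarrow> X \<longlonglongrightarrow> y \<Longrightarrow> (\<lambda>k. f s (X k)) \<longlonglongrightarrow> f s y"
  shows "(\<lambda>z. f (fst z) (snd z)) \<in> borel_measurable (M \<Otimes>\<^sub>M borel)"
proof -
  obtain D :: "'a set" where "countable D" "closure D = UNIV" using sep by blast
  then obtain d :: "nat \<Rightarrow> 'a" where d: "\<And>y e. e > 0 \<Longrightarrow> \<exists>j. dist y (d j) < e"
    using separable_dense_seq by blast
  define J where "J k y = (LEAST j. dist y (d j) < 1 / Suc k)" for k y
  have J: "dist y (d (J k y)) < 1 / Suc k" for k y
    unfolding J_def by (rule LeastI_ex) (rule d, simp)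
  have "(\<lambda>y. dist y (d j)) \<in> borel_measurable borel" for j
    by (intro borel_measurable_continuous_onI continuous_intros)
  from measurable_comp[OF measurable_snd this]
  have [measurable]: "(\<lambda>z. dist (snd z) (d j)) \<in> borel_measurable (M \<Otimes>\<^sub>M borel)" for j
    by (simp add: comp_def)
  have Jm: "(\<lambda>z. J k (snd z)) \<in> measurable (M \<Otimes>\<^sub>M borel) (count_space UNIV)" for k
    unfolding J_def by measurable
  have approx: "(\<lambda>z. f (fst z) (d (J k (snd z)))) \<in> borel_measurable (M \<Otimes>\<^sub>M borel)" for k
  proof (rule measurable_compose_countable[where f = "\<lambda>j z. f (fst z) (d j)", OF _ Jm])
    show "(\<lambda>z. f (fst z) (d j)) \<in> borel_measurable (M \<Otimes>\<^sub>M borel)" for j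
      using measurable_comp[OF measurable_fst meas[of "d j"]] by (simp add: comp_def)
  qed
  show ?thesis
  proof (rule borel_measurable_LIMSEQ_metric[OF approx])
    fix z :: "'e \<times> 'a" assume "z \<in> space (M \<Otimes>\<^sub>M borel)"
    then have s: "fst z \<in> space M" by (auto simp: space_pair_measure)
    have "dist (d (J k (snd z))) (snd z) \<le> 1 / Suc k" for k
      using J[of "snd z" k] by (simp add: dist_commute)
    then have "(\<lambda>k. dist (d (J k (snd z))) (snd z)) \<longlonglongrightarrow> 0"
      by (intro tendsto_sandwich[OF _ _ tendsto_const LIMSEQ_Suc[OF lim_const_over_n[of 1]]]) auto
    then have "(\<lambda>k. d (J k (snd z))) \<longlonglongrightarrow> snd z" using tendsto_dist_iff by blast
    then show "(\<lambda>k. f (fst z) (d (J k (snd z)))) \<longlonglongrightarrow> f (fst z) (snd z)" by (rule cont[OF s])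
  qed
qed

definition tangent_open :: "'a::metric_space \<Rightarrow> 'a tvec set \<Rightarrow> bool" where
  "tangent_open x U \<longleftrightarrow>
     U \<subseteq> tangent_space x \<and> (\<forall>u\<in>U. \<exists>e>0. {v \<in> tangent_space x. tdist x u v < e} \<subseteq> U)"

lemma istopology_tangent_open: "istopology (tangent_open x)"
  unfolding istopology_def
proof (intro conjI allI impI)
  fix S T assume S: "tangent_open x S" and T: "tangent_open x T"
  show "tangent_open x (S \<inter> T)" unfolding tangent_open_def
  proof (intro conjI ballI)
    show "S \<inter> T \<subseteq> tangent_space x" using S by (auto simp: tangent_open_def)
    fix u assume u: "u \<in> S \<inter> T"
    obtain e1 where "e1 > 0" "{v \<in> tangent_space x. tdist x u v < e1} \<subseteq> S"
      using S u by (auto simp: tangent_open_def)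
    moreover obtain e2 where "e2 > 0" "{v \<in> tangent_space x. tdist x u v < e2} \<subseteq> T"
      using T u by (auto simp: tangent_open_def)
    ultimately show "\<exists>e>0. {v \<in> tangent_space x. tdist x u v < e} \<subseteq> S \<inter> T"
      by (intro exI[of _ "min e1 e2"]) auto
  qed
next
  fix K assume K: "\<forall>S\<in>K. tangent_open x S"
  show "tangent_open x (\<Union>K)" unfolding tangent_open_def
  proof (intro conjI ballI)
    show "\<Union>K \<subseteq> tangent_space x" using K by (auto simp: tangent_open_def)
    fix u assume "u \<in> \<Union>K"
    then obtain S where S: "S \<in> K" "u \<in> S" by blast
    then obtain e where "e > 0" "{v \<in> tangent_space x. tdist x u v < e} \<subseteq> S"
      using K unfolding tangent_open_def by blast
    then show "\<exists>e>0. {v \<in> tangent_space x. tdist x u v < e} \<subseteq> \<Union>K" using S by blast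
  qed
qed

lemma openin_tangent_topology: "openin (tangent_topology x) U \<longleftrightarrow> tangent_open x U"
proof -
  have "tangent_topology x = topology (tangent_open x)"
    unfolding tangent_topology_def tangent_open_def ..
  then show ?thesis using topology_inverse'[OF istopology_tangent_open[of x]] by simp
qed

lemma space_tangent_borel: "space (tangent_borel x) = tangent_space x"
  unfolding tangent_borel_def
  by (rule space_measure_of) (auto simp: openin_tangent_topology tangent_open_def)

lemma tangent_open_sets: "tangent_open x U \<Longrightarrow> U \<in> sets (tangent_borel x)"
  unfolding tangent_borel_def
  by (subst sets_measure_of) (auto simp: openin_tangent_topology tangent_open_def)

lemma borel_measurable_tinner:
  assumes cat: "CAT0_ineq TYPE('a::metric_space)" and V: "V \<in> tangent_space (x::'a)"
  shows "(\<lambda>U. tinner x U V) \<in> borel_measurable (tangent_borel x)"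
proof (rule borel_measurableI)
  fix S :: "real set" assume S: "open S"
  have nV: "tnorm x V \<ge> 0" by (rule tnorm_nonneg[OF cat V])
  have "tangent_open x ((\<lambda>U. tinner x U V) -` S \<inter> tangent_space x)" unfolding tangent_open_def
  proof (intro conjI ballI)
    fix U assume U: "U \<in> (\<lambda>U. tinner x U V) -` S \<inter> tangent_space x"
    then obtain \<epsilon> where \<epsilon>: "\<epsilon> > 0" "\<And>r. dist r (tinner x U V) < \<epsilon> \<Longrightarrow> r \<in> S"
      using S unfolding open_dist by blast
    define e where "e = \<epsilon> / (tnorm x V + 1)"
    have "tinner x W V \<in> S" if W: "W \<in> tangent_space x" "tdist x U W < e" for W
    proof -
      have "\<bar>tinner x U V - tinner x W V\<bar> \<le> tnorm x V * tdist x U W"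
        using tinner_lipschitz[OF cat _ V W(1)] U by auto
      also have "\<dots> \<le> tnorm x V * e" using W nV by (intro mult_left_mono) auto
      also have "\<dots> < \<epsilon>" using \<epsilon> nV by (simp add: e_def field_simps)
      finally show ?thesis using \<epsilon>(2) by (simp add: dist_real_def abs_minus_commute)
    qed
    moreover have "e > 0" using \<epsilon> nV by (simp add: e_def)
    ultimately show "\<exists>e>0. {W \<in> tangent_space x. tdist x U W < e} \<subseteq> (\<lambda>U. tinner x U V) -` S \<inter> tangent_space x"
      by blast
  qed auto
  then show "(\<lambda>U. tinner x U V) -` S \<inter> space (tangent_borel x) \<in> sets (tangent_borel x)"
    unfolding space_tangent_borel by (rule tangent_open_sets)
qed

section \<open>Filtrations and conditional expectations\<close>

definition natural_filtration_gen :: "'w measure \<Rightarrow> 'e measure \<Rightarrow> (nat \<Rightarrow> 'w \<Rightarrow> 'e) \<Rightarrow> nat \<Rightarrow> 'w set set" where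
  "natural_filtration_gen P M \<xi> n = {\<xi> i -` B \<inter> space P | i B. i \<in> {1..n} \<and> B \<in> sets M}"

lemma space_natural_filtration: "space (natural_filtration P M \<xi> n) = space P"
  unfolding natural_filtration_def by (rule space_measure_of_conv)

lemma sets_natural_filtration:
  "sets (natural_filtration P M \<xi> n) = sigma_sets (space P) (natural_filtration_gen P M \<xi> n)"
  unfolding natural_filtration_def natural_filtration_gen_def by (rule sets_measure_of) auto

context
  fixes P :: "'w measure" and M :: "'e measure" and \<xi> :: "nat \<Rightarrow> 'w \<Rightarrow> 'e"
  assumes \<xi>_meas: "\<And>i. i \<ge> 1 \<Longrightarrow> \<xi> i \<in> measurable P M"
begin

lemma subalgebra_natural_filtration: "subalgebra P (natural_filtration P M \<xi> n)"
proof -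
  have "natural_filtration_gen P M \<xi> n \<subseteq> sets P"
    using \<xi>_meas measurable_sets by (fastforce simp: natural_filtration_gen_def)
  then show ?thesis
    unfolding subalgebra_def space_natural_filtration sets_natural_filtration
    by (simp add: sets.sigma_sets_subset)
qed

lemma natural_filtration_mono:
  "m \<le> n \<Longrightarrow> subalgebra (natural_filtration P M \<xi> n) (natural_filtration P M \<xi> m)"
  unfolding subalgebra_def space_natural_filtration sets_natural_filtration
  by (intro conjI refl sigma_sets_subseteq) (fastforce simp: natural_filtration_gen_def)

lemma measurable_natural_filtration: "i \<in> {1..n} \<Longrightarrow> \<xi> i \<in> measurable (natural_filtration P M \<xi> n) M"
proof (rule measurableI)
  fix \<omega> assume "i \<in> {1..n}" "\<omega> \<in> space (natural_filtration P M \<xi> n)"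
  then show "\<xi> i \<omega> \<in> space M"
    using \<xi>_meas[of i] measurable_space by (auto simp: space_natural_filtration)
next
  fix B assume "i \<in> {1..n}" "B \<in> sets M"
  then have "\<xi> i -` B \<inter> space P \<in> natural_filtration_gen P M \<xi> n"
    by (auto simp: natural_filtration_gen_def)
  then show "\<xi> i -` B \<inter> space (natural_filtration P M \<xi> n) \<in> sets (natural_filtration P M \<xi> n)"
    unfolding space_natural_filtration sets_natural_filtration by auto
qed

lemma sigma_finite_subalgebra_natural_filtration:
  assumes "prob_space P"
  shows "sigma_finite_subalgebra P (natural_filtration P M \<xi> n)"
proof -
  interpret prob_space P by (rule assms)
  show ?thesis
    using subalgebra_natural_filtration finite_measure_axioms
    by (intro finite_measure_subalgebra_is_sigma_finite)
       (simp add: finite_measure_subalgebra_def finite_measure_subalgebra_axioms_def)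
qed

end

lemma (in prob_space) indep_set_mono:
  "indep_set A B \<Longrightarrow> A' \<subseteq> A \<Longrightarrow> B' \<subseteq> B \<Longrightarrow> indep_set A' B'"
  unfolding indep_set_def by (erule indep_sets_mono_sets) (auto split: bool.split)

lemma (in prob_space) indep_set_natural_filtration_next:
  assumes iid: "indep_vars (\<lambda>_. N) \<xi> {1..}"
  shows "indep_set (sets (natural_filtration M N \<xi> n))
           (sigma_sets (space M) {\<xi> (Suc n) -` B \<inter> space M | B. B \<in> sets N})"
proof -
  define E where "E i = {\<xi> i -` B \<inter> space M | B. B \<in> sets N}" for i
  define I where "I b = (if b then {1..n} else {Suc n})" for b
  have "indep_sets E {1..}" using iid unfolding indep_vars_def2 E_def by blast
  then have "indep_sets E (\<Union>b. I b)" by (rule indep_sets_mono_index[rotated]) (auto simp: I_def)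
  then have "indep_sets (\<lambda>b. sigma_sets (space M) (\<Union>i\<in>I b. E i)) UNIV"
  proof (rule indep_sets_collect_sigma)
    show "Int_stable (E i)" for i
      unfolding Int_stable_def E_def
    proof safe
      fix A B assume "A \<in> sets N" "B \<in> sets N"
      then show "\<exists>C. (\<xi> i -` A \<inter> space M) \<inter> (\<xi> i -` B \<inter> space M) = \<xi> i -` C \<inter> space M \<and> C \<in> sets N"
        by (intro exI[of _ "A \<inter> B"]) auto
    qed
  qed (auto simp: disjoint_family_on_def I_def)
  moreover have "(\<lambda>b. sigma_sets (space M) (\<Union>i\<in>I b. E i))
      = case_bool (sets (natural_filtration M N \<xi> n)) (sigma_sets (space M) (E (Suc n)))"
  proof (rule ext)
    have "(\<Union>i\<in>{1..n}. E i) = natural_filtration_gen M N \<xi> n"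
      unfolding E_def natural_filtration_gen_def by fastforce
    then show "sigma_sets (space M) (\<Union>i\<in>I b. E i)
        = case_bool (sets (natural_filtration M N \<xi> n)) (sigma_sets (space M) (E (Suc n))) b" for b
      by (cases b) (simp_all add: I_def sets_natural_filtration)
  qed
  ultimately show ?thesis unfolding indep_set_def by (simp add: E_def)
qed

lemma (in prob_space) real_cond_exp_indep:
  assumes F: "subalgebra M F" and Y: "integrable M Y"
    and indep: "indep_set (sets F) (sigma_sets (space M) {Y -` S \<inter> space M | S. S \<in> sets borel})"
  shows "AE x in M. real_cond_exp M F Y x = expectation Y"
proof -
  interpret sigma_finite_subalgebra M F
    using F finite_measure_axioms by (intro finite_measure_subalgebra_is_sigma_finite)
      (simp add: finite_measure_subalgebra_def finite_measure_subalgebra_axioms_def)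
  show ?thesis
  proof (rule real_cond_exp_charact)
    fix A assume A: "A \<in> sets F"
    then have AM: "A \<in> sets M" using F by (auto simp: subalgebra_def)
    have "indep_var borel (indicator A :: 'a \<Rightarrow> real) borel Y"
      unfolding indep_var_eq
    proof (intro conjI)
      show "random_variable borel (indicator A :: 'a \<Rightarrow> real)" using AM by simp
      show "random_variable borel Y" using Y by simp
      have sp: "space F = space M" using F by (simp add: subalgebra_def)
      have "indicator A \<in> borel_measurable F" using A by simp
      then have "{(indicator A :: 'a \<Rightarrow> real) -` S \<inter> space M | S. S \<in> sets borel} \<subseteq> sets F"
        using measurable_sets[of "indicator A" F borel] sp by auto
      then have "sigma_sets (space F) {(indicator A :: 'a \<Rightarrow> real) -` S \<inter> space M | S. S \<in> sets borel} \<subseteq> sets F"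
        by (rule sets.sigma_sets_subset)
      then have "sigma_sets (space M) {(indicator A :: 'a \<Rightarrow> real) -` S \<inter> space M | S. S \<in> sets borel} \<subseteq> sets F"
        by (simp add: sp)
      then show "indep_set (sigma_sets (space M) {(indicator A :: 'a \<Rightarrow> real) -` S \<inter> space M | S. S \<in> sets borel})
          (sigma_sets (space M) {Y -` S \<inter> space M | S. S \<in> sets borel})"
        by (rule indep_set_mono[OF indep]) simp
    qed
    then have "(\<integral>\<omega>. indicator A \<omega> * Y \<omega> \<partial>M) = (\<integral>\<omega>. indicator A \<omega> \<partial>M) * expectation Y"
      using Y AM by (intro indep_var_lebesgue_integral) (auto intro!: integrable_real_indicator simp: emeasure_eq_measure)
    then show "(\<integral>\<omega>\<in>A. Y \<omega> \<partial>M) = (\<integral>\<omega>\<in>A. expectation Y \<partial>M)"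
      using AM by (simp add: set_lebesgue_integral_def)
  qed (use Y in auto)
qed

lemma real_cond_exp_natural_filtration_next:
  assumes P: "prob_space P" and iid: "prob_space.indep_vars P (\<lambda>_. M) \<xi> {1..}"
    and distr: "distr P M (\<xi> (Suc n)) = M" and h: "integrable M h"
  shows "integrable P (\<lambda>\<omega>. h (\<xi> (Suc n) \<omega>))"
    and "AE \<omega> in P. real_cond_exp P (natural_filtration P M \<xi> n) (\<lambda>\<omega>. h (\<xi> (Suc n) \<omega>)) \<omega> = (\<integral>s. h s \<partial>M)"
proof -
  interpret prob_space P by (rule P)
  have \<xi>_meas: "\<xi> i \<in> measurable P M" if "i \<ge> 1" for i
    using iid that unfolding indep_vars_def2 by auto
  have \<xi>: "\<xi> (Suc n) \<in> measurable P M" by (rule \<xi>_meas) simp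
  have hm: "h \<in> borel_measurable M" using h by simp
  show int: "integrable P (\<lambda>\<omega>. h (\<xi> (Suc n) \<omega>))"
    using integrable_distr_eq[OF \<xi> hm] h distr by simp
  have "{(\<lambda>\<omega>. h (\<xi> (Suc n) \<omega>)) -` S \<inter> space P | S. S \<in> sets borel}
      \<subseteq> {\<xi> (Suc n) -` B \<inter> space P | B. B \<in> sets M}"
  proof safe
    fix S :: "real set" assume "S \<in> sets borel"
    then have "h -` S \<inter> space M \<in> sets M" using measurable_sets[OF hm] by simp
    moreover have "(\<lambda>\<omega>. h (\<xi> (Suc n) \<omega>)) -` S \<inter> space P = \<xi> (Suc n) -` (h -` S \<inter> space M) \<inter> space P"
      using measurable_space[OF \<xi>] by auto
    ultimately show "\<exists>B. (\<lambda>\<omega>. h (\<xi> (Suc n) \<omega>)) -` S \<inter> space P = \<xi> (Suc n) -` B \<inter> space P \<and> B \<in> sets M"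
      by blast
  qed
  then have "indep_set (sets (natural_filtration P M \<xi> n))
      (sigma_sets (space P) {(\<lambda>\<omega>. h (\<xi> (Suc n) \<omega>)) -` S \<inter> space P | S. S \<in> sets borel})"
    by (intro indep_set_mono[OF indep_set_natural_filtration_next[OF iid]] sigma_sets_subseteq) auto
  from real_cond_exp_indep[OF subalgebra_natural_filtration[OF \<xi>_meas] int this]
  show "AE \<omega> in P. real_cond_exp P (natural_filtration P M \<xi> n) (\<lambda>\<omega>. h (\<xi> (Suc n) \<omega>)) \<omega> = (\<integral>s. h s \<partial>M)"
    using integral_distr[OF \<xi> hm] distr by simp
qed

lemma (in sigma_finite_subalgebra) real_cond_exp_lincomb:
  fixes a b c :: real
  assumes f: "integrable M f" and g: "integrable M g" and h: "integrable M h" and k: "integrable M k"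
  shows "AE x in M. real_cond_exp M F (\<lambda>x. f x + a * g x + b * h x + c * k x) x
    = real_cond_exp M F f x + a * real_cond_exp M F g x + b * real_cond_exp M F h x + c * real_cond_exp M F k x"
proof -
  have add_cmult: "AE x in M. real_cond_exp M F (\<lambda>x. u x + d * v x) x
      = real_cond_exp M F u x + d * real_cond_exp M F v x"
    if "integrable M u" "integrable M v" for u v and d :: real
  proof -
    have "AE x in M. real_cond_exp M F (\<lambda>x. u x + d * v x) x
        = real_cond_exp M F u x + real_cond_exp M F (\<lambda>x. d * v x) x"
      using that by (intro real_cond_exp_add) auto
    moreover have "AE x in M. real_cond_exp M F (\<lambda>x. d * v x) x = d * real_cond_exp M F v x"
      using that(2) by (rule real_cond_exp_cmult)
    ultimately show ?thesis by eventually_elim simp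
  qed
  have "integrable M (\<lambda>x. f x + a * g x)" "integrable M (\<lambda>x. f x + a * g x + b * h x)"
    using f g h by simp_all
  from add_cmult[OF f g, of a] add_cmult[OF this(1) h, of b] add_cmult[OF this(2) k, of c]
  show ?thesis by eventually_elim simp
qed

section \<open>The stochastic resolvent iteration\<close>

lemma borel_measurable_dist_const:
  "f \<in> borel_measurable N \<Longrightarrow> (\<lambda>\<omega>. dist (f \<omega>) (c::'a::metric_space)) \<in> borel_measurable N"
  using measurable_comp[of f N borel "\<lambda>y. dist y c" borel]
  by (simp add: comp_def borel_measurable_continuous_onI continuous_intros)

locale random_resolvent_iteration =
  M: prob_space M + P: prob_space P
  for M :: "'e measure" and P :: "'w measure"
    and A :: "'e \<Rightarrow> 'a::metric_space \<Rightarrow> 'a tvec set"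
    and x0 :: 'a and lam :: "nat \<Rightarrow> real"
    and \<xi> :: "nat \<Rightarrow> 'w \<Rightarrow> 'e" and x :: "nat \<Rightarrow> 'w \<Rightarrow> 'a" +
  assumes hadamard: "hadamard_space TYPE('a)"
    and separable: "\<exists>D::'a set. countable D \<and> closure D = UNIV"
    and A_mono: "\<And>s. s \<in> space M \<Longrightarrow> monotone_vf (A s)"
    and A_surj: "\<And>s. s \<in> space M \<Longrightarrow> surjectivity_cond (A s)"
    and J_meas: "\<And>l y. l > 0 \<Longrightarrow> (\<lambda>s. resolvent (A s) l y) \<in> borel_measurable M"
    and lam_pos: "\<And>n. lam n > 0"
    and x_0: "\<And>\<omega>. x 0 \<omega> = x0"
    and x_Suc: "\<And>n \<omega>. x (Suc n) \<omega> = resolvent (A (\<xi> (Suc n) \<omega>)) (lam n) (x n \<omega>)"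
    and iid: "P.indep_vars (\<lambda>_. M) \<xi> {1..}"
    and distr: "\<And>i. i \<ge> 1 \<Longrightarrow> distr P M (\<xi> i) = M"
begin

abbreviation "filt \<equiv> natural_filtration P M \<xi>"

lemma \<xi>_measurable: "i \<ge> 1 \<Longrightarrow> \<xi> i \<in> measurable P M"
  using iid unfolding P.indep_vars_def2 by auto

lemma distr_next: "distr P M (\<xi> (Suc n)) = M"
  using distr by simp

lemma \<xi>_space: "\<omega> \<in> space P \<Longrightarrow> \<xi> (Suc n) \<omega> \<in> space M"
  using measurable_space[OF \<xi>_measurable[of "Suc n"]] by simp

lemma resolvent_measurable:
  assumes "l > 0"
  shows "(\<lambda>z. resolvent (A (fst z)) l (snd z)) \<in> borel_measurable (M \<Otimes>\<^sub>M borel)"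
  using J_meas[OF assms] resolvent_LIMSEQ[OF hadamard A_mono A_surj assms]
  by (intro borel_measurable_caratheodory[OF separable])

lemma step_length_measurable:
  assumes l: "l > 0"
  shows "(\<lambda>z. dist (snd z) (resolvent (A (fst z)) l (snd z))) \<in> borel_measurable (M \<Otimes>\<^sub>M borel)"
proof (rule borel_measurable_caratheodory[OF separable])
  show "(\<lambda>s. dist y (resolvent (A s) l y)) \<in> borel_measurable M" for y
    using borel_measurable_dist_const[OF J_meas[OF l], of y] by (simp add: dist_commute)
  show "(\<lambda>k. dist (X k) (resolvent (A s) l (X k))) \<longlonglongrightarrow> dist y (resolvent (A s) l y)"
    if "s \<in> space M" "X \<longlonglongrightarrow> y" for s X y
    by (intro tendsto_dist that(2) resolvent_LIMSEQ[OF hadamard A_mono[OF that(1)] A_surj[OF that(1)] l])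
qed

lemma iterate_measurable: "x n \<in> borel_measurable (filt n)"
proof (induction n)
  case 0
  have "x 0 = (\<lambda>_. x0)" using x_0 by auto
  then show ?case by simp
next
  case (Suc n)
  have eq: "x (Suc n) = (\<lambda>z. resolvent (A (fst z)) (lam n) (snd z)) \<circ> (\<lambda>\<omega>. (\<xi> (Suc n) \<omega>, x n \<omega>))"
    using x_Suc by (auto simp: comp_def)
  have "\<xi> (Suc n) \<in> measurable (filt (Suc n)) M"
    by (rule measurable_natural_filtration[OF \<xi>_measurable]) auto
  moreover have "x n \<in> borel_measurable (filt (Suc n))"
    by (rule measurable_from_subalg[OF natural_filtration_mono[OF \<xi>_measurable le_SucI[OF order_refl]] Suc.IH])
  ultimately show ?case
    unfolding eq by (rule measurable_comp[OF measurable_Pair resolvent_measurable[OF lam_pos]])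
qed

lemma iterate_measurable_P: "x n \<in> borel_measurable P"
  by (rule measurable_from_subalg[OF subalgebra_natural_filtration[OF \<xi>_measurable] iterate_measurable])

lemma step_norm_measurable:
  "(\<lambda>\<omega>. (tnorm (x (Suc n) \<omega>) (yosida (A (\<xi> (Suc n) \<omega>)) (lam n) (x n \<omega>)))\<^sup>2) \<in> borel_measurable P"
proof -
  have "(\<lambda>\<omega>. dist (x n \<omega>) (resolvent (A (\<xi> (Suc n) \<omega>)) (lam n) (x n \<omega>))) \<in> borel_measurable P"
    using measurable_comp[OF measurable_Pair[OF \<xi>_measurable iterate_measurable_P] step_length_measurable[OF lam_pos]]
    by (simp add: comp_def)
  then have meas: "(\<lambda>\<omega>. (dist (x n \<omega>) (resolvent (A (\<xi> (Suc n) \<omega>)) (lam n) (x n \<omega>)) / lam n)\<^sup>2)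
      \<in> borel_measurable P"
    by (intro borel_measurable_power borel_measurable_divide borel_measurable_const)
  have "(tnorm (x (Suc n) \<omega>) (yosida (A (\<xi> (Suc n) \<omega>)) (lam n) (x n \<omega>)))\<^sup>2
      = (dist (x n \<omega>) (resolvent (A (\<xi> (Suc n) \<omega>)) (lam n) (x n \<omega>)) / lam n)\<^sup>2"
    if "\<omega> \<in> space P" for \<omega>
    using tnorm_yosida[OF hadamard A_mono[OF \<xi>_space[OF that]] A_surj[OF \<xi>_space[OF that]] lam_pos]
    by (simp add: x_Suc)
  then show ?thesis using meas by (subst measurable_cong) auto
qed

end

locale strongly_monotone_resolvent_iteration =
  random_resolvent_iteration M P A x0 lam \<xi> x
  for M :: "'e measure" and P :: "'w measure" and A :: "'e \<Rightarrow> 'a::metric_space \<Rightarrow> 'a tvec set"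
    and x0 lam \<xi> x +
  fixes xstar :: 'a and \<alpha> :: "'e \<Rightarrow> real" and \<phi>star :: "'e \<Rightarrow> 'a tvec"
  assumes A_tangent: "\<And>s y. s \<in> space M \<Longrightarrow> A s y \<subseteq> tangent_space y"
    and \<alpha>_meas: "\<alpha> \<in> borel_measurable M"
    and \<alpha>_range: "\<And>s. s \<in> space M \<Longrightarrow> \<alpha> s \<in> {0<..1}"
    and A_strong: "\<And>s. s \<in> space M \<Longrightarrow> strongly_monotone_vf (A s) (\<alpha> s)"
    and \<phi>star_sel: "\<phi>star \<in> selections M A 2 xstar"
begin

lemma \<phi>star_in: "s \<in> space M \<Longrightarrow> \<phi>star s \<in> A s xstar"
  using \<phi>star_sel by (auto simp: selections_def)

lemma \<phi>star_tangent: "s \<in> space M \<Longrightarrow> \<phi>star s \<in> tangent_space xstar"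
  using A_tangent \<phi>star_in by blast

lemma integrable_\<alpha>: "integrable M \<alpha>"
proof (rule M.integrable_const_bound[where B = 1])
  show "AE s in M. norm (\<alpha> s) \<le> 1"
  proof (rule AE_I2)
    fix s assume "s \<in> space M"
    then have "0 < \<alpha> s" "\<alpha> s \<le> 1" using \<alpha>_range by auto
    then show "norm (\<alpha> s) \<le> 1" by simp
  qed
qed (rule \<alpha>_meas)

lemma integrable_tnorm_\<phi>star_sq: "integrable M (\<lambda>s. (tnorm xstar (\<phi>star s))\<^sup>2)"
proof -
  have "integrable M (\<lambda>s. (tdist xstar (\<phi>star s) (tzero xstar)) ^ 2)"
    using \<phi>star_sel by (simp add: selections_def tangent_Lp_def)
  moreover have "integrable M (\<lambda>s. (tdist xstar (\<phi>star s) (tzero xstar)) ^ 2)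
      \<longleftrightarrow> integrable M (\<lambda>s. (tnorm xstar (\<phi>star s))\<^sup>2)"
    by (rule Bochner_Integration.integrable_cong[OF refl])
       (simp add: tdist_tzero[OF hadamard_spaceD(2)[OF hadamard] \<phi>star_tangent])
  ultimately show ?thesis by simp
qed

lemma tinner_\<phi>star_measurable:
  "(\<lambda>z. tinner xstar (\<phi>star (fst z)) (tlog xstar (snd z))) \<in> borel_measurable (M \<Otimes>\<^sub>M borel)"
proof (rule borel_measurable_caratheodory[OF separable])
  have \<phi>star_meas: "\<phi>star \<in> M \<rightarrow>\<^sub>M tangent_borel xstar"
    using \<phi>star_sel by (simp add: selections_def tangent_Lp_def)
  show "(\<lambda>s. tinner xstar (\<phi>star s) (tlog xstar y)) \<in> borel_measurable M" for y
    using measurable_comp[OF \<phi>star_meas borel_measurable_tinner[OF hadamard_spaceD(2)[OF hadamard]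
        tlog_in_tangent_space[OF hadamard]]]
    by (simp add: comp_def)
next
  fix s and X :: "nat \<Rightarrow> 'a" and y :: 'a
  assume s: "s \<in> space M" and X: "X \<longlonglongrightarrow> y"
  let ?c = "tnorm xstar (\<phi>star s)"
  have "(\<lambda>k. dist (X k) y) \<longlonglongrightarrow> 0" using X tendsto_dist_iff by blast
  then have "(\<lambda>k. ?c * dist (X k) y) \<longlonglongrightarrow> 0"
    using tendsto_mult[OF tendsto_const, of _ 0 sequentially ?c] by simp
  moreover have "\<forall>k. norm (tinner xstar (\<phi>star s) (tlog xstar (X k)) - tinner xstar (\<phi>star s) (tlog xstar y))
      \<le> ?c * dist (X k) y"
    using tinner_tlog_lipschitz[OF hadamard \<phi>star_tangent[OF s]] by simp
  ultimately have "(\<lambda>k. tinner xstar (\<phi>star s) (tlog xstar (X k)) - tinner xstar (\<phi>star s) (tlog xstar y)) \<longlonglongrightarrow> 0"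
    by (rule Lim_null_comparison[OF always_eventually, rotated])
  then show "(\<lambda>k. tinner xstar (\<phi>star s) (tlog xstar (X k))) \<longlonglongrightarrow> tinner xstar (\<phi>star s) (tlog xstar y)"
    by (simp add: LIM_zero_iff)
qed

lemma iterate_step_ineq:
  assumes \<omega>: "\<omega> \<in> space P"
  shows "(dist (x (Suc n) \<omega>) xstar)\<^sup>2 \<le> (1 + 2 * (lam n)\<^sup>2) * (dist (x n \<omega>) xstar)\<^sup>2
            - 2 * lam n * \<alpha> (\<xi> (Suc n) \<omega>) * (dist (x n \<omega>) xstar)\<^sup>2
            - 2 * lam n * tinner xstar (\<phi>star (\<xi> (Suc n) \<omega>)) (tlog xstar (x n \<omega>))
            + (lam n)\<^sup>2 * ((tnorm xstar (\<phi>star (\<xi> (Suc n) \<omega>)))\<^sup>2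
               + 2 * (tnorm (x (Suc n) \<omega>) (yosida (A (\<xi> (Suc n) \<omega>)) (lam n) (x n \<omega>)))\<^sup>2)"
proof -
  have s: "\<xi> (Suc n) \<omega> \<in> space M" by (rule \<xi>_space[OF \<omega>])
  then have "\<alpha> (\<xi> (Suc n) \<omega>) \<le> 1" using \<alpha>_range by simp
  from resolvent_step_ineq[OF hadamard A_mono[OF s] A_surj[OF s] lam_pos A_strong[OF s] \<phi>star_in[OF s]
      \<phi>star_tangent[OF s] this, where x = "x n \<omega>"]
  show ?thesis by (simp add: x_Suc)
qed

lemma integrable_dist_sq_iterate: "integrable P (\<lambda>\<omega>. (dist (x n \<omega>) xstar)\<^sup>2)"
proof (induction n)
  case 0
  show ?case using x_0 by simp
next
  case (Suc n)
  let ?bound = "\<lambda>\<omega>. 2 * (dist (x n \<omega>) xstar)\<^sup>2 + 2 * (lam n)\<^sup>2 * (tnorm xstar (\<phi>star (\<xi> (Suc n) \<omega>)))\<^sup>2"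
  show ?case
  proof (rule Bochner_Integration.integrable_bound)
    show "integrable P ?bound"
      using Suc.IH real_cond_exp_natural_filtration_next(1)[OF P.prob_space_axioms iid distr_next integrable_tnorm_\<phi>star_sq]
      by simp
    show "(\<lambda>\<omega>. (dist (x (Suc n) \<omega>) xstar)\<^sup>2) \<in> borel_measurable P"
      by (intro borel_measurable_power borel_measurable_dist_const iterate_measurable_P)
    show "AE \<omega> in P. norm ((dist (x (Suc n) \<omega>) xstar)\<^sup>2) \<le> norm (?bound \<omega>)"
    proof (rule AE_I2)
      fix \<omega> assume \<omega>: "\<omega> \<in> space P"
      have s: "\<xi> (Suc n) \<omega> \<in> space M" by (rule \<xi>_space[OF \<omega>])
      have "(dist (x (Suc n) \<omega>) xstar)\<^sup>2 \<le> ?bound \<omega>"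
        using resolvent_dist_sq_bound[OF hadamard A_mono[OF s] A_surj[OF s] lam_pos A_strong[OF s]
            \<phi>star_in[OF s] \<phi>star_tangent[OF s], where x = "x n \<omega>"]
        by (simp add: x_Suc)
      then show "norm ((dist (x (Suc n) \<omega>) xstar)\<^sup>2) \<le> norm (?bound \<omega>)" by simp
    qed
  qed
qed

end

context strongly_monotone_resolvent_iteration
begin

lemma integrable_tnorm_\<phi>star_sq_next: "integrable P (\<lambda>\<omega>. (tnorm xstar (\<phi>star (\<xi> (Suc n) \<omega>)))\<^sup>2)"
  by (rule real_cond_exp_natural_filtration_next(1)[OF P.prob_space_axioms iid distr_next integrable_tnorm_\<phi>star_sq])

lemma integrable_tinner_term:
  "integrable P (\<lambda>\<omega>. tinner xstar (\<phi>star (\<xi> (Suc n) \<omega>)) (tlog xstar (x n \<omega>)))"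
proof (rule Bochner_Integration.integrable_bound)
  show "integrable P (\<lambda>\<omega>. (tnorm xstar (\<phi>star (\<xi> (Suc n) \<omega>)))\<^sup>2 + (dist (x n \<omega>) xstar)\<^sup>2)"
    using integrable_tnorm_\<phi>star_sq_next integrable_dist_sq_iterate by simp
  show "(\<lambda>\<omega>. tinner xstar (\<phi>star (\<xi> (Suc n) \<omega>)) (tlog xstar (x n \<omega>))) \<in> borel_measurable P"
    using measurable_comp[OF measurable_Pair[OF \<xi>_measurable iterate_measurable_P] tinner_\<phi>star_measurable]
    by (simp add: comp_def)
  show "AE \<omega> in P. norm (tinner xstar (\<phi>star (\<xi> (Suc n) \<omega>)) (tlog xstar (x n \<omega>)))
      \<le> norm ((tnorm xstar (\<phi>star (\<xi> (Suc n) \<omega>)))\<^sup>2 + (dist (x n \<omega>) xstar)\<^sup>2)"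
  proof (rule AE_I2)
    fix \<omega> assume \<omega>: "\<omega> \<in> space P"
    have "\<bar>tinner xstar (\<phi>star (\<xi> (Suc n) \<omega>)) (tlog xstar (x n \<omega>))\<bar>
        \<le> tnorm xstar (\<phi>star (\<xi> (Suc n) \<omega>)) * dist (x n \<omega>) xstar"
      using tinner_tlog_bound[OF hadamard \<phi>star_tangent[OF \<xi>_space[OF \<omega>]], where a = "x n \<omega>"]
      by (simp add: dist_commute[of xstar])
    also have "\<dots> \<le> (tnorm xstar (\<phi>star (\<xi> (Suc n) \<omega>)))\<^sup>2 + (dist (x n \<omega>) xstar)\<^sup>2"
      using sum_squares_bound[of "tnorm xstar (\<phi>star (\<xi> (Suc n) \<omega>))" "dist (x n \<omega>) xstar"]
        zero_le_power2[of "tnorm xstar (\<phi>star (\<xi> (Suc n) \<omega>))"] zero_le_power2[of "dist (x n \<omega>) xstar"]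
      by linarith
    finally show "norm (tinner xstar (\<phi>star (\<xi> (Suc n) \<omega>)) (tlog xstar (x n \<omega>)))
        \<le> norm ((tnorm xstar (\<phi>star (\<xi> (Suc n) \<omega>)))\<^sup>2 + (dist (x n \<omega>) xstar)\<^sup>2)"
      by simp
  qed
qed

lemma integrable_step_norm_sq:
  "integrable P (\<lambda>\<omega>. (tnorm (x (Suc n) \<omega>) (yosida (A (\<xi> (Suc n) \<omega>)) (lam n) (x n \<omega>)))\<^sup>2)"
proof (rule Bochner_Integration.integrable_bound[OF _ step_norm_measurable])
  let ?a = "\<lambda>\<omega>. dist (x n \<omega>) xstar" and ?b = "\<lambda>\<omega>. dist (x (Suc n) \<omega>) xstar"
  show "integrable P (\<lambda>\<omega>. 2 * ((?a \<omega>)\<^sup>2 + (?b \<omega>)\<^sup>2) / (lam n)\<^sup>2)"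
    using integrable_dist_sq_iterate[of n] integrable_dist_sq_iterate[of "Suc n"] by simp
  show "AE \<omega> in P. norm ((tnorm (x (Suc n) \<omega>) (yosida (A (\<xi> (Suc n) \<omega>)) (lam n) (x n \<omega>)))\<^sup>2)
      \<le> norm (2 * ((?a \<omega>)\<^sup>2 + (?b \<omega>)\<^sup>2) / (lam n)\<^sup>2)"
  proof (rule AE_I2)
    fix \<omega> assume \<omega>: "\<omega> \<in> space P"
    have "(dist (x n \<omega>) (x (Suc n) \<omega>))\<^sup>2 \<le> (?a \<omega> + ?b \<omega>)\<^sup>2"
      using dist_triangle[of "x n \<omega>" "x (Suc n) \<omega>" xstar] by (simp add: dist_commute power_mono)
    also have "\<dots> \<le> 2 * ((?a \<omega>)\<^sup>2 + (?b \<omega>)\<^sup>2)"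
      using sum_squares_bound[of "?a \<omega>" "?b \<omega>"] by (simp add: power2_eq_square algebra_simps)
    finally have "(dist (x n \<omega>) (x (Suc n) \<omega>) / lam n)\<^sup>2 \<le> 2 * ((?a \<omega>)\<^sup>2 + (?b \<omega>)\<^sup>2) / (lam n)\<^sup>2"
      by (simp add: power_divide divide_right_mono)
    then show "norm ((tnorm (x (Suc n) \<omega>) (yosida (A (\<xi> (Suc n) \<omega>)) (lam n) (x n \<omega>)))\<^sup>2)
        \<le> norm (2 * ((?a \<omega>)\<^sup>2 + (?b \<omega>)\<^sup>2) / (lam n)\<^sup>2)"
      using tnorm_yosida[OF hadamard A_mono[OF \<xi>_space[OF \<omega>]] A_surj[OF \<xi>_space[OF \<omega>]] lam_pos]
      by (simp add: x_Suc)
  qed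
qed

end

context strongly_monotone_resolvent_iteration
begin

lemma real_cond_exp_dist_sq_mult_next:
  assumes h: "integrable M h" and bounded: "\<And>s. s \<in> space M \<Longrightarrow> \<bar>h s\<bar> \<le> C"
  shows "integrable P (\<lambda>\<omega>. (dist (x n \<omega>) xstar)\<^sup>2 * h (\<xi> (Suc n) \<omega>))"
    and "AE \<omega> in P. real_cond_exp P (filt n) (\<lambda>\<omega>. (dist (x n \<omega>) xstar)\<^sup>2 * h (\<xi> (Suc n) \<omega>)) \<omega>
           = (dist (x n \<omega>) xstar)\<^sup>2 * (\<integral>s. h s \<partial>M)"
proof -
  interpret F: sigma_finite_subalgebra P "filt n"
    by (rule sigma_finite_subalgebra_natural_filtration[OF \<xi>_measurable P.prob_space_axioms])
  note h_next = real_cond_exp_natural_filtration_next[OF P.prob_space_axioms iid distr_next[of n] h]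
  have d_F: "(\<lambda>\<omega>. (dist (x n \<omega>) xstar)\<^sup>2) \<in> borel_measurable (filt n)"
    by (intro borel_measurable_power borel_measurable_dist_const iterate_measurable)
  show int: "integrable P (\<lambda>\<omega>. (dist (x n \<omega>) xstar)\<^sup>2 * h (\<xi> (Suc n) \<omega>))"
  proof (rule Bochner_Integration.integrable_bound)
    show "integrable P (\<lambda>\<omega>. C * (dist (x n \<omega>) xstar)\<^sup>2)"
      using integrable_dist_sq_iterate by simp
    show "(\<lambda>\<omega>. (dist (x n \<omega>) xstar)\<^sup>2 * h (\<xi> (Suc n) \<omega>)) \<in> borel_measurable P"
      using measurable_from_subalg[OF subalgebra_natural_filtration[OF \<xi>_measurable] d_F] h_next(1)
      by (intro borel_measurable_times) auto
    show "AE \<omega> in P. norm ((dist (x n \<omega>) xstar)\<^sup>2 * h (\<xi> (Suc n) \<omega>)) \<le> norm (C * (dist (x n \<omega>) xstar)\<^sup>2)"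
    proof (rule AE_I2)
      fix \<omega> assume "\<omega> \<in> space P"
      then have "\<bar>h (\<xi> (Suc n) \<omega>)\<bar> \<le> C" by (rule bounded[OF \<xi>_space])
      then have "\<bar>h (\<xi> (Suc n) \<omega>)\<bar> \<le> \<bar>C\<bar>" by linarith
      then have "(dist (x n \<omega>) xstar)\<^sup>2 * \<bar>h (\<xi> (Suc n) \<omega>)\<bar> \<le> (dist (x n \<omega>) xstar)\<^sup>2 * \<bar>C\<bar>"
        by (rule mult_left_mono) simp
      then show "norm ((dist (x n \<omega>) xstar)\<^sup>2 * h (\<xi> (Suc n) \<omega>)) \<le> norm (C * (dist (x n \<omega>) xstar)\<^sup>2)"
        by (simp add: abs_mult mult.commute)
    qed
  qed
  have "AE \<omega> in P. real_cond_exp P (filt n) (\<lambda>\<omega>. (dist (x n \<omega>) xstar)\<^sup>2 * h (\<xi> (Suc n) \<omega>)) \<omega>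
      = (dist (x n \<omega>) xstar)\<^sup>2 * real_cond_exp P (filt n) (\<lambda>\<omega>. h (\<xi> (Suc n) \<omega>)) \<omega>"
    using h_next(1) int d_F by (intro F.real_cond_exp_mult) auto
  with h_next(2) show "AE \<omega> in P. real_cond_exp P (filt n) (\<lambda>\<omega>. (dist (x n \<omega>) xstar)\<^sup>2 * h (\<xi> (Suc n) \<omega>)) \<omega>
      = (dist (x n \<omega>) xstar)\<^sup>2 * (\<integral>s. h s \<partial>M)"
    by eventually_elim simp
qed

lemma real_cond_exp_step_coefficient:
  fixes n :: nat
  defines "k \<equiv> \<lambda>s. 1 + 2 * (lam n)\<^sup>2 - 2 * lam n * \<alpha> s"
  shows "integrable P (\<lambda>\<omega>. (dist (x n \<omega>) xstar)\<^sup>2 * k (\<xi> (Suc n) \<omega>))"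
    and "AE \<omega> in P. real_cond_exp P (filt n) (\<lambda>\<omega>. (dist (x n \<omega>) xstar)\<^sup>2 * k (\<xi> (Suc n) \<omega>)) \<omega>
           = (dist (x n \<omega>) xstar)\<^sup>2 * (1 + 2 * (lam n)\<^sup>2 - 2 * lam n * (\<integral>s. \<alpha> s \<partial>M))"
proof -
  have k_int: "integrable M k"
    unfolding k_def by (intro Bochner_Integration.integrable_diff M.integrable_const integrable_mult_right integrable_\<alpha>)
  have k_bound: "\<bar>k s\<bar> \<le> 1 + 2 * (lam n)\<^sup>2 + 2 * lam n" if "s \<in> space M" for s
  proof -
    have "0 \<le> lam n * \<alpha> s" "lam n * \<alpha> s \<le> lam n"
      using \<alpha>_range[OF that] lam_pos[of n] by (simp_all add: mult_left_le)
    then show ?thesis using zero_le_power2[of "lam n"] unfolding k_def abs_le_iff by linarith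
  qed
  have "(\<integral>s. k s \<partial>M) = 1 + 2 * (lam n)\<^sup>2 - 2 * lam n * (\<integral>s. \<alpha> s \<partial>M)"
    using integrable_\<alpha> by (simp add: k_def M.prob_space)
  then show "integrable P (\<lambda>\<omega>. (dist (x n \<omega>) xstar)\<^sup>2 * k (\<xi> (Suc n) \<omega>))"
    and "AE \<omega> in P. real_cond_exp P (filt n) (\<lambda>\<omega>. (dist (x n \<omega>) xstar)\<^sup>2 * k (\<xi> (Suc n) \<omega>)) \<omega>
           = (dist (x n \<omega>) xstar)\<^sup>2 * (1 + 2 * (lam n)\<^sup>2 - 2 * lam n * (\<integral>s. \<alpha> s \<partial>M))"
    using real_cond_exp_dist_sq_mult_next[OF k_int k_bound] by auto
qed

lemma expected_dist_sq_step:
  assumes A3: "AE \<omega> in P. real_cond_exp P (filt n)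
                 (\<lambda>\<omega>. tinner xstar (\<phi>star (\<xi> (Suc n) \<omega>)) (tlog xstar (x n \<omega>))) \<omega> = 0"
  shows "AE \<omega> in P. real_cond_exp P (filt n) (\<lambda>\<omega>. (dist (x (Suc n) \<omega>) xstar)\<^sup>2) \<omega>
     \<le> (1 + 2 * (lam n)\<^sup>2) * (dist (x n \<omega>) xstar)\<^sup>2
        - 2 * lam n * (\<integral>s. \<alpha> s \<partial>M) * (dist (x n \<omega>) xstar)\<^sup>2
        + (lam n)\<^sup>2 * (2 * real_cond_exp P (filt n)
               (\<lambda>\<omega>. (tnorm (x (Suc n) \<omega>) (yosida (A (\<xi> (Suc n) \<omega>)) (lam n) (x n \<omega>)))\<^sup>2) \<omega>
             + (\<integral>s. (tnorm xstar (\<phi>star s))\<^sup>2 \<partial>M))"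
proof -
  interpret F: sigma_finite_subalgebra P "filt n"
    by (rule sigma_finite_subalgebra_natural_filtration[OF \<xi>_measurable P.prob_space_axioms])
  define l where "l = lam n"
  define D where "D \<omega> = (dist (x n \<omega>) xstar)\<^sup>2 * (1 + 2 * l\<^sup>2 - 2 * l * \<alpha> (\<xi> (Suc n) \<omega>))" for \<omega>
  define G where "G \<omega> = tinner xstar (\<phi>star (\<xi> (Suc n) \<omega>)) (tlog xstar (x n \<omega>))" for \<omega>
  define N where "N \<omega> = (tnorm xstar (\<phi>star (\<xi> (Suc n) \<omega>)))\<^sup>2" for \<omega>
  define V where "V \<omega> = (tnorm (x (Suc n) \<omega>) (yosida (A (\<xi> (Suc n) \<omega>)) l (x n \<omega>)))\<^sup>2" for \<omega>
  note D = real_cond_exp_step_coefficient[of n, folded l_def D_def[unfolded l_def, abs_def]]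
  have ints: "integrable P D" "integrable P G" "integrable P N" "integrable P V"
    using D(1) integrable_tinner_term integrable_tnorm_\<phi>star_sq_next integrable_step_norm_sq
    by (simp_all add: G_def[abs_def] N_def[abs_def] V_def[abs_def] l_def)
  then have R_int: "integrable P (\<lambda>\<omega>. D \<omega> + (- 2 * l) * G \<omega> + l\<^sup>2 * N \<omega> + (2 * l\<^sup>2) * V \<omega>)" by simp
  have "AE \<omega> in P. (dist (x (Suc n) \<omega>) xstar)\<^sup>2 \<le> D \<omega> + (- 2 * l) * G \<omega> + l\<^sup>2 * N \<omega> + (2 * l\<^sup>2) * V \<omega>"
    using iterate_step_ineq by (intro AE_I2) (simp add: D_def G_def N_def V_def l_def algebra_simps)
  from F.real_cond_exp_mono[OF this integrable_dist_sq_iterate R_int]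
  have "AE \<omega> in P. real_cond_exp P (filt n) (\<lambda>\<omega>. (dist (x (Suc n) \<omega>) xstar)\<^sup>2) \<omega>
      \<le> real_cond_exp P (filt n) (\<lambda>\<omega>. D \<omega> + (- 2 * l) * G \<omega> + l\<^sup>2 * N \<omega> + (2 * l\<^sup>2) * V \<omega>) \<omega>" .
  moreover note F.real_cond_exp_lincomb[OF ints, of "- 2 * l" "l\<^sup>2" "2 * l\<^sup>2"]
  moreover have "AE \<omega> in P. real_cond_exp P (filt n) N \<omega> = (\<integral>s. (tnorm xstar (\<phi>star s))\<^sup>2 \<partial>M)"
    unfolding N_def
    by (rule real_cond_exp_natural_filtration_next(2)[OF P.prob_space_axioms iid distr_next integrable_tnorm_\<phi>star_sq])
  moreover note D(2) A3[folded G_def[abs_def]]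
  ultimately show ?thesis
    unfolding l_def[symmetric] V_def[abs_def, symmetric] by eventually_elim (simp add: algebra_simps)
qed

end

theorem mainTheorem7:
  fixes M :: "'e measure" and P :: "'w measure"
    and A :: "'e \<Rightarrow> 'a::metric_space \<Rightarrow> 'a tvec set"
    and x0 xstar :: 'a and lam :: "nat \<Rightarrow> real"
    and \<xi> :: "nat \<Rightarrow> 'w \<Rightarrow> 'e" and x :: "nat \<Rightarrow> 'w \<Rightarrow> 'a"
    and \<alpha> :: "'e \<Rightarrow> real" and \<phi>star :: "'e \<Rightarrow> 'a tvec"
  assumes hadamard: "hadamard_space TYPE('a)"
    and sepX: "\<exists>D::'a set. countable D \<and> closure D = UNIV"
    and sepT: "\<And>y::'a. separable_space (tangent_topology y)"
    and probM: "prob_space M" and probP: "prob_space P"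
    and A_tangent: "\<And>s y. s \<in> space M \<Longrightarrow> A s y \<subseteq> tangent_space y"
    and A_mono: "\<And>s. s \<in> space M \<Longrightarrow> monotone_vf (A s)"
    and A_surj: "\<And>s. s \<in> space M \<Longrightarrow> surjectivity_cond (A s)"
    and J_meas: "\<And>l y. l > 0 \<Longrightarrow> (\<lambda>s. resolvent (A s) l y) \<in> borel_measurable M"
    \<comment> \<open>iteration\<close>
    and lam_pos: "\<And>n. lam n > 0"
    and x_0: "\<And>\<omega>. x 0 \<omega> = x0"
    and x_Suc: "\<And>n \<omega>. x (Suc n) \<omega> = resolvent (A (\<xi> (Suc n) \<omega>)) (lam n) (x n \<omega>)"
    \<comment> \<open>(A0)\<close>
    and A0_sq: "summable (\<lambda>n. (lam n)\<^sup>2)"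
    and A0_div: "\<not> summable lam"
    and A0_iid: "prob_space.indep_vars P (\<lambda>_. M) \<xi> {1..}"
    and A0_distr: "\<And>i. i \<ge> 1 \<Longrightarrow> distr P M (\<xi> i) = M"
    \<comment> \<open>(A1)\<close>
    and A1_meas: "\<alpha> \<in> borel_measurable M"
    and A1_range: "\<And>s. s \<in> space M \<Longrightarrow> \<alpha> s \<in> {0<..1}"
    and A1_strong: "\<And>s. s \<in> space M \<Longrightarrow> strongly_monotone_vf (A s) (\<alpha> s)"
    and A1_pos: "(\<integral>s. \<alpha> s \<partial>M) > 0"
    \<comment> \<open>(A2)\<close>
    and A2_sel: "\<phi>star \<in> selections M A 2 xstar"
    and A2_zero: "is_tangent_barycenter M xstar \<phi>star (tzero xstar)"
    \<comment> \<open>(A3)\<close>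
    and A3: "\<And>n. AE \<omega> in P. real_cond_exp P (natural_filtration P M \<xi> n)
               (\<lambda>\<omega>. tinner xstar (\<phi>star (\<xi> (Suc n) \<omega>)) (tlog xstar (x n \<omega>))) \<omega> = 0"
  shows "\<forall>n. AE \<omega> in P.
     real_cond_exp P (natural_filtration P M \<xi> n) (\<lambda>\<omega>. (dist (x (Suc n) \<omega>) xstar)\<^sup>2) \<omega>
       \<le> (1 + 2 * (lam n)\<^sup>2) * (dist (x n \<omega>) xstar)\<^sup>2
          - 2 * lam n * (\<integral>s. \<alpha> s \<partial>M) * (dist (x n \<omega>) xstar)\<^sup>2
          + (lam n)\<^sup>2 * (2 * real_cond_exp P (natural_filtration P M \<xi> n)
                 (\<lambda>\<omega>. (tnorm (x (Suc n) \<omega>) (yosida (A (\<xi> (Suc n) \<omega>)) (lam n) (x n \<omega>)))\<^sup>2) \<omega>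
               + (\<integral>s. (tnorm xstar (\<phi>star s))\<^sup>2 \<partial>M))"
proof -
  interpret strongly_monotone_resolvent_iteration M P A x0 lam \<xi> x xstar \<alpha> \<phi>star
    by (intro strongly_monotone_resolvent_iteration.intro random_resolvent_iteration.intro
          strongly_monotone_resolvent_iteration_axioms.intro random_resolvent_iteration_axioms.intro assms)
  show ?thesis using expected_dist_sq_step[OF A3] by blast
qed

end
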